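(* Let $\nu\in\mathbb{N}$ and for $i=1,2$ let $$f_i(\lambda)=\frac{\sigma_i^2}{2\pi}\,|1-e^{i\lambda}|^{-2d_i},\qquad \lambda\in(-\pi,\pi],$$ with $0<\sigma_i^2<\infty$ and $0<d_i<1/2$ (spectral densities of ARFIMA$(0,d_i,0)$ processes). Define $$\Delta_{\nu,B}(T):=\left|\frac1T\,\mathrm{tr}\big[B_T(f_1)B_T(f_2)\big]^\nu-(2\pi)^{2\nu-1}\int_{-\pi}^{\pi}[f_1(\lambda)f_2(\lambda)]^\nu\,d\lambda\right|.$$ If $d:=d_1+d_2<1/(2\nu)$, then for any $\varepsilon>0$, $\Delta_{\nu,B}(T)=O(T^{-\gamma+\varepsilon})$ as $T\to\infty$, where $\gamma=\frac1{2\nu}-(d_1+d_2)$.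
   Context: For an integrable real even function $f$ on $(-\pi,\pi]$, $\hat f(t)=\int_{-\pi}^{\pi}e^{i\lambda t}f(\lambda)\,d\lambda$ ($t\in\mathbb{Z}$), and $B_T(f)$ is the $T\times T$ Toeplitz matrix $(\hat f(s-t))_{s,t=1,\dots,T}$, $T\in\mathbb{N}$. *)

theory Defs
  imports "HOL-Analysis.Analysis" "HOL-Library.Landau_Symbols" "Jordan_Normal_Form.Matrix"
begin

definition arfima_sd :: "real \<Rightarrow> real \<Rightarrow> real \<Rightarrow> real" where
  "arfima_sd s2 d x = s2 / (2 * pi) * cmod (1 - exp (\<i> * complex_of_real x)) powr (- 2 * d)"

definition fcoeff :: "(real \<Rightarrow> real) \<Rightarrow> int \<Rightarrow> complex" where
  "fcoeff f t = (LINT x:{-pi<..pi}|lborel. exp (\<i> * complex_of_real x * of_int t) * complex_of_real (f x))"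

text \<open>Toeplitz matrix B_T(f) = (hat f(s - t))_{s,t=1..T} (indices shifted to 0..T-1).\<close>
definition toeplitz :: "nat \<Rightarrow> (real \<Rightarrow> real) \<Rightarrow> complex mat" where
  "toeplitz T f = mat T T (\<lambda>(s, t). fcoeff f (int s - int t))"

definition mat_trace :: "complex mat \<Rightarrow> complex" where
  "mat_trace A = (\<Sum>i<dim_row A. A $$ (i, i))"

definition Delta :: "nat \<Rightarrow> (real \<Rightarrow> real) \<Rightarrow> (real \<Rightarrow> real) \<Rightarrow> nat \<Rightarrow> real" where
  "Delta \<nu> f1 f2 T = cmod (mat_trace ((toeplitz T f1 * toeplitz T f2) ^\<^sub>m \<nu>) / of_nat T
      - complex_of_real ((2 * pi) ^ (2 * \<nu> - 1) * (LINT x:{-pi<..pi}|lborel. (f1 x * f2 x) ^ \<nu>)))"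

end

theory Submission
  imports Defs "HOL-Real_Asymp.Real_Asymp"
begin

text \<open>The Toeplitz matrices of ARFIMA densities are truncations of Toeplitz operators on \<int>.
  If C_e is the lower triangular Toeplitz operator of the coefficients of (1 - z)^(-e), then the
  operator of |1 - e^(ix)|^(-2e) is C_e C_e^T; since C_a C_b = C_(a+b) and Toeplitz operators on \<int>
  commute, these operators form a semigroup in e. So the \<nu>-th power of the product of the two
  infinite operators is again of this form, with constant diagonal (2\<pi>)^(2\<nu>-1) \<integral> (f_1 f_2)^\<nu>.
  The finite matrix power misses exactly the products in which an intermediate index leaves the
  window [0, T); each such term carries two correlations decaying like m^(2e-1) whose exponents add
  up to \<delta> = \<nu> (d_1 + d_2), and summing them over rows inside and columns outside the window gives
  O(T^(2\<delta>)). Hence the normalised trace differs from its limit by O(T^(2\<delta>-1)), a rate at least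
  as good as T^(-\<gamma>).\<close>

section \<open>Coefficients of \<open>(1 - z) powr -e\<close>\<close>

text \<open>The coefficients of the moving average representation of ARFIMA(0,e,0), i.e. the Taylor
  coefficients of \<open>(1 - z) powr -e\<close> (see \<open>ma_coeff_sums\<close>).\<close>

definition ma_coeff :: "real \<Rightarrow> nat \<Rightarrow> real" where
  "ma_coeff e n = pochhammer e n / fact n"

lemma ma_coeff_0 [simp]: "ma_coeff e 0 = 1"
  by (simp add: ma_coeff_def)

lemma ma_coeff_Suc: "ma_coeff e (Suc n) = ma_coeff e n * ((e + real n) / (real n + 1))"
  by (simp add: ma_coeff_def pochhammer_Suc field_simps)

lemma ma_coeff_zero_exponent: "ma_coeff 0 n = (if n = 0 then 1 else 0)"
  by (simp add: ma_coeff_def pochhammer_0_left)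

lemma ma_coeff_nonneg: "0 \<le> e \<Longrightarrow> 0 \<le> ma_coeff e n"
  unfolding ma_coeff_def
  by (cases "e = 0") (auto simp: pochhammer_0_left intro!: divide_nonneg_pos pochhammer_nonneg)

lemma decseq_ma_coeff:
  assumes "0 \<le> e" "e \<le> 1"
  shows "decseq (ma_coeff e)"
proof (rule decseq_SucI)
  fix n
  have "(e + real n) / (real n + 1) \<le> 1" using assms by simp
  then show "ma_coeff e (Suc n) \<le> ma_coeff e n"
    unfolding ma_coeff_Suc using ma_coeff_nonneg[OF assms(1)] by (rule mult_left_le)
qed

lemma ma_coeff_add: "ma_coeff (a + b) n = (\<Sum>k\<le>n. ma_coeff a k * ma_coeff b (n - k))"
proof -
  have "ma_coeff (a + b) n
      = (\<Sum>k\<le>n. of_nat (n choose k) * pochhammer a k * pochhammer b (n - k) / fact n)"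
    by (simp add: ma_coeff_def pochhammer_binomial_sum sum_divide_distrib)
  also have "\<dots> = (\<Sum>k\<le>n. ma_coeff a k * ma_coeff b (n - k))"
    by (intro sum.cong refl) (simp add: binomial_fact ma_coeff_def field_simps)
  finally show ?thesis .
qed

lemma ma_coeff_le_exp_harm:
  assumes "0 \<le> e" "e \<le> 1"
  shows "ma_coeff e n \<le> exp (- (1 - e) * harm n)"
proof (induction n)
  case 0 then show ?case by (simp add: harm_def)
next
  case (Suc n)
  have "(e + real n) / (real n + 1) = 1 + (- (1 - e) / (real n + 1))"
    by (simp add: field_simps)
  then have "(e + real n) / (real n + 1) \<le> exp (- (1 - e) / (real n + 1))"
    by (metis exp_ge_add_one_self)
  then have "ma_coeff e (Suc n) \<le> exp (- (1 - e) * harm n) * exp (- (1 - e) / (real n + 1))"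
    unfolding ma_coeff_Suc using Suc.IH ma_coeff_nonneg[OF assms(1)] assms by (intro mult_mono) auto
  also have "\<dots> = exp (- (1 - e) * harm (Suc n))"
    by (simp add: harm_Suc exp_add[symmetric] field_simps)
  finally show ?case .
qed

lemma ma_coeff_le_powr:
  assumes "0 \<le> e" "e \<le> 1"
  shows "ma_coeff e n \<le> (real n + 1) powr (e - 1)"
proof -
  have "ma_coeff e n \<le> exp (- (1 - e) * harm n)" by (rule ma_coeff_le_exp_harm[OF assms])
  also have "\<dots> \<le> exp (- (1 - e) * ln (real n + 1))"
    using harm_ge_ln[of n] assms by (simp add: mult_left_mono_neg)
  also have "\<dots> = (real n + 1) powr (e - 1)"
    by (simp add: powr_def)
  finally show ?thesis .
qed

lemma ma_coeff_sums:
  fixes z :: complex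
  assumes "norm z < 1"
  shows "(\<lambda>n. complex_of_real (ma_coeff e n) * z ^ n) sums (1 - z) powr (- complex_of_real e)"
proof -
  have "((- complex_of_real e) gchoose n) * (- z) ^ n = complex_of_real (ma_coeff e n) * z ^ n" for n
  proof -
    have "((- complex_of_real e) gchoose n) * (- z) ^ n
        = ((- 1) ^ n * (- 1) ^ n) * (pochhammer (of_real e) n / fact n) * z ^ n"
      by (simp add: gbinomial_pochhammer power_minus[of z])
    then show ?thesis
      by (simp add: ma_coeff_def pochhammer_of_real[symmetric] power_mult_distrib[symmetric])
  qed
  moreover have "(\<lambda>n. ((- of_real e) gchoose n) * (- z) ^ n) sums (1 + (- z)) powr (- complex_of_real e)"
    by (rule gen_binomial_complex) (use assms in simp)
  ultimately show ?thesis by simp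
qed

lemma powr_add_one_diff_mvt:
  fixes x p :: real
  assumes "0 < x"
  obtains \<xi> where "x < \<xi>" "\<xi> < x + 1" "(x + 1) powr p - x powr p = p * \<xi> powr (p - 1)"
proof -
  have "\<exists>\<xi>. x < \<xi> \<and> \<xi> < x + 1 \<and> (x + 1) powr p - x powr p = (x + 1 - x) * (p * \<xi> powr (p - 1))"
    by (rule MVT2) (use assms in \<open>auto intro!: has_real_derivative_powr\<close>)
  then show ?thesis using that by auto
qed

lemma powr_Suc_diff_ge:
  assumes "0 < a" "a \<le> 1"
  shows "a * (real j + 1) powr (a - 1) \<le> (real j + 1) powr a - real j powr a"
proof (cases "j = 0")
  case True then show ?thesis using assms by simp
next
  case False
  then obtain \<xi> where \<xi>: "real j < \<xi>" "\<xi> < real j + 1"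
    "(real j + 1) powr a - real j powr a = a * \<xi> powr (a - 1)"
    using powr_add_one_diff_mvt[of "real j" a] by auto
  have "(real j + 1) powr (a - 1) \<le> \<xi> powr (a - 1)"
    using \<xi> False assms by (intro powr_mono2') auto
  then show ?thesis using \<xi>(3) assms by (simp add: mult_left_mono)
qed

lemma sum_powr_le:
  assumes "0 < a" "a \<le> 1"
  shows "(\<Sum>j<n. (real j + 1) powr (a - 1)) \<le> real n powr a / a"
proof -
  have "a * (\<Sum>j<n. (real j + 1) powr (a - 1)) \<le> (\<Sum>j<n. real (Suc j) powr a - real j powr a)"
    unfolding sum_distrib_left using powr_Suc_diff_ge[OF assms] by (intro sum_mono) (simp add: add.commute)
  also have "\<dots> = real n powr a"
    by (subst sum_lessThan_telescope[where f = "\<lambda>j. real j powr a"]) simp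
  finally show ?thesis using assms by (simp add: field_simps)
qed

lemma powr_minus_le_diff:
  fixes b x :: real
  assumes "1 < b" "0 < x"
  shows "(x + 1) powr (- b) \<le> (x powr (1 - b) - (x + 1) powr (1 - b)) / (b - 1)"
proof -
  obtain \<xi> where \<xi>: "x < \<xi>" "\<xi> < x + 1"
    "(x + 1) powr (1 - b) - x powr (1 - b) = (1 - b) * \<xi> powr (1 - b - 1)"
    using powr_add_one_diff_mvt[OF assms(2)] .
  have "(x + 1) powr (- b) \<le> \<xi> powr (- b)"
    using \<xi> assms by (intro powr_mono2') auto
  moreover have "x powr (1 - b) - (x + 1) powr (1 - b) = (b - 1) * \<xi> powr (- b)"
    using \<xi>(3) by (simp add: algebra_simps)
  ultimately have "(b - 1) * (x + 1) powr (- b) \<le> x powr (1 - b) - (x + 1) powr (1 - b)"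
    using assms by (simp add: mult_left_mono)
  then show ?thesis using assms by (simp add: pos_le_divide_eq mult.commute)
qed

lemma powr_tail_sums_le:
  assumes "1 < b"
  shows "summable (\<lambda>j. (real (j + m) + 1) powr (- b))"
    and "(\<Sum>j. (real (j + m) + 1) powr (- b)) \<le> b / (b - 1) * (real m + 1) powr (1 - b)"
proof -
  define f where "f j = (real (j + m) + 1) powr (1 - b) / (b - 1)" for j
  have "filterlim (\<lambda>j. real (j + m) + 1) at_top sequentially"
    by real_asymp
  then have "f \<longlonglongrightarrow> 0"
    unfolding f_def using assms by (intro tendsto_divide_zero tendsto_neg_powr) auto
  then have telescope: "(\<lambda>j. f j - f (Suc j)) sums f 0"
    using telescope_sums'[of f 0] by simp
  have le: "(real (Suc j + m) + 1) powr (- b) \<le> f j - f (Suc j)" for j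
    using powr_minus_le_diff[OF assms, of "real (j + m) + 1"] unfolding f_def
    by (simp add: diff_divide_distrib add_ac)
  have tail: "summable (\<lambda>j. (real (Suc j + m) + 1) powr (- b))"
    by (rule summable_comparison_test'[OF sums_summable[OF telescope], of 0]) (use le in auto)
  then show summable: "summable (\<lambda>j. (real (j + m) + 1) powr (- b))"
    using summable_Suc_iff[of "\<lambda>j. (real (j + m) + 1) powr (- b)"] by simp
  have "(\<Sum>j. (real (j + m) + 1) powr (- b))
      = (\<Sum>j. (real (Suc j + m) + 1) powr (- b)) + (real m + 1) powr (- b)"
    using suminf_split_head[OF summable] by simp
  also have "(\<Sum>j. (real (Suc j + m) + 1) powr (- b)) \<le> f 0"
    using suminf_le[OF le tail sums_summable[OF telescope]] telescope by (simp add: sums_iff)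
  also have "(real m + 1) powr (- b) \<le> (real m + 1) powr (1 - b)"
    by (intro powr_mono) auto
  also have "f 0 + (real m + 1) powr (1 - b) = b / (b - 1) * (real m + 1) powr (1 - b)"
    using assms by (simp add: f_def field_simps)
  finally show "(\<Sum>j. (real (j + m) + 1) powr (- b)) \<le> b / (b - 1) * (real m + 1) powr (1 - b)"
    by simp
qed

definition acov :: "real \<Rightarrow> nat \<Rightarrow> real" where
  "acov e m = (\<Sum>j. ma_coeff e j * ma_coeff e (j + m))"

lemma ma_coeff_mult_le_powr:
  assumes "0 \<le> e" "e < 1/2"
  shows "ma_coeff e j * ma_coeff e (j + m) \<le> (real j + 1) powr (- (2 - 2 * e))"
proof -
  have "ma_coeff e j * ma_coeff e (j + m) \<le> ma_coeff e j * ma_coeff e j"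
    using decseqD[OF decseq_ma_coeff, of e j "j + m"] ma_coeff_nonneg[of e j] assms
    by (intro mult_left_mono) simp_all
  also have "\<dots> \<le> (real j + 1) powr (e - 1) * (real j + 1) powr (e - 1)"
    using ma_coeff_le_powr[of e j] ma_coeff_nonneg[of e j] assms by (intro mult_mono) simp_all
  also have "\<dots> = (real j + 1) powr (- (2 - 2 * e))"
    by (simp add: powr_add[symmetric])
  finally show ?thesis .
qed

lemma summable_acov:
  assumes "0 \<le> e" "e < 1/2"
  shows "summable (\<lambda>j. ma_coeff e j * ma_coeff e (j + m))"
proof (rule summable_comparison_test'[of _ 0])
  show "summable (\<lambda>j. (real (j + 0) + 1) powr (- (2 - 2 * e)))"
    using powr_tail_sums_le(1)[of "2 - 2 * e" 0] assms by simp
  show "norm (ma_coeff e j * ma_coeff e (j + m)) \<le> (real (j + 0) + 1) powr (- (2 - 2 * e))" for j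
    using ma_coeff_mult_le_powr[OF assms, of j m] ma_coeff_nonneg[OF assms(1)] by simp
qed

lemma acov_nonneg: "0 \<le> e \<Longrightarrow> e < 1/2 \<Longrightarrow> 0 \<le> acov e m"
  unfolding acov_def by (intro suminf_nonneg summable_acov) (auto simp: ma_coeff_nonneg)

lemma acov_zero_exponent: "acov 0 m = (if m = 0 then 1 else 0)"
proof -
  have "(\<lambda>j. ma_coeff 0 j * ma_coeff 0 (j + m)) = (\<lambda>j. if j = 0 then ma_coeff 0 m else 0)"
    by (auto simp: ma_coeff_zero_exponent)
  moreover have "(\<Sum>j. if j = 0 then ma_coeff 0 m else 0) = ma_coeff 0 m"
    by (rule sums_unique[symmetric]) (rule sums_single[of 0 "\<lambda>_. ma_coeff 0 m", simplified])
  ultimately show ?thesis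
    unfolding acov_def by (simp add: ma_coeff_zero_exponent)
qed

lemma acov_head_le:
  assumes "0 < e" "e < 1/2"
  shows "(\<Sum>j<m. ma_coeff e j * ma_coeff e (j + m)) \<le> 1 / e * (real m + 1) powr (2 * e - 1)"
proof -
  have "ma_coeff e j * ma_coeff e (j + m) \<le> (real j + 1) powr (e - 1) * (real m + 1) powr (e - 1)" for j
  proof -
    have "ma_coeff e (j + m) \<le> ma_coeff e m"
      using decseqD[OF decseq_ma_coeff, of e m "j + m"] assms by simp
    also have "\<dots> \<le> (real m + 1) powr (e - 1)"
      using ma_coeff_le_powr[of e m] assms by simp
    finally show ?thesis
      using ma_coeff_le_powr[of e j] ma_coeff_nonneg[of e] assms by (intro mult_mono) simp_all
  qed
  then have "(\<Sum>j<m. ma_coeff e j * ma_coeff e (j + m))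
      \<le> (\<Sum>j<m. (real j + 1) powr (e - 1)) * (real m + 1) powr (e - 1)"
    unfolding sum_distrib_right by (intro sum_mono)
  also have "\<dots> \<le> (real m powr e / e) * (real m + 1) powr (e - 1)"
    using sum_powr_le[of e m] assms by (intro mult_right_mono) simp_all
  also have "\<dots> \<le> ((real m + 1) powr e / e) * (real m + 1) powr (e - 1)"
    using assms by (intro mult_right_mono divide_right_mono powr_mono2) simp_all
  also have "\<dots> = 1 / e * (real m + 1) powr (2 * e - 1)"
    by (simp add: powr_add[symmetric])
  finally show ?thesis .
qed

lemma acov_tail_le:
  assumes "0 \<le> e" "e < 1/2"
  shows "(\<Sum>j. ma_coeff e (j + m) * ma_coeff e (j + m + m))
       \<le> (2 - 2 * e) / (1 - 2 * e) * (real m + 1) powr (2 * e - 1)"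
proof -
  have "(\<Sum>j. ma_coeff e (j + m) * ma_coeff e (j + m + m)) \<le> (\<Sum>j. (real (j + m) + 1) powr (- (2 - 2 * e)))"
  proof (rule suminf_le)
    show "summable (\<lambda>j. ma_coeff e (j + m) * ma_coeff e (j + m + m))"
      using summable_acov[OF assms, of m] summable_iff_shift[of "\<lambda>j. ma_coeff e j * ma_coeff e (j + m)" m]
      by simp
    show "summable (\<lambda>j. (real (j + m) + 1) powr (- (2 - 2 * e)))"
      using powr_tail_sums_le(1)[of "2 - 2 * e" m] assms by simp
    show "ma_coeff e (j + m) * ma_coeff e (j + m + m) \<le> (real (j + m) + 1) powr (- (2 - 2 * e))" for j
      by (rule ma_coeff_mult_le_powr[OF assms])
  qed
  also have "\<dots> \<le> (2 - 2 * e) / (1 - 2 * e) * (real m + 1) powr (2 * e - 1)"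
    using powr_tail_sums_le(2)[of "2 - 2 * e" m] assms by simp
  finally show ?thesis .
qed

text \<open>Split the series at j = m: for j < m the factor ma_coeff e (j + m) is small, for j \<ge> m
  the product decays like j powr (2 e - 2).\<close>

lemma acov_le_powr:
  assumes "0 < e" "e < 1/2"
  shows "acov e m \<le> (1 / e + (2 - 2 * e) / (1 - 2 * e)) * (real m + 1) powr (2 * e - 1)"
proof -
  have "acov e m = (\<Sum>j. ma_coeff e (j + m) * ma_coeff e (j + m + m)) + (\<Sum>j<m. ma_coeff e j * ma_coeff e (j + m))"
    unfolding acov_def using summable_acov assms by (intro suminf_split_initial_segment) auto
  also have "\<dots> \<le> (1 / e + (2 - 2 * e) / (1 - 2 * e)) * (real m + 1) powr (2 * e - 1)"
    using add_mono[OF acov_tail_le[of e m] acov_head_le[of e m]] assms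
    by (simp only: distrib_right add.commute)
  finally show ?thesis .
qed

lemma acov_bound:
  assumes "0 \<le> e" "e < 1/2"
  obtains C where "0 \<le> C" "\<And>m. acov e m \<le> C * (real m + 1) powr (2 * e - 1)"
proof (cases "e = 0")
  case True
  then show ?thesis by (intro that[of 1]) (auto simp: acov_zero_exponent)
next
  case False
  with assms show ?thesis
    by (intro that[OF _ acov_le_powr]) simp_all
qed

section \<open>The fractional density and its Fourier coefficients\<close>

lemma sin_ge_half_self:
  assumes "0 \<le> x" "x \<le> pi / 3"
  shows "x / 2 \<le> sin x"
proof (cases "x = 0")
  case False
  then have "0 < x" using assms by simp
  then obtain z where z: "0 < z" "z < x" "sin x - sin 0 = (x - 0) * cos z"
    using MVT2[of 0 x sin cos] by (auto intro: DERIV_sin)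
  have "cos (pi / 3) \<le> cos z"
    using z assms by (intro cos_monotone_0_pi_le) auto
  then have "x * (1 / 2) \<le> x * cos z"
    using \<open>0 < x\<close> by (intro mult_left_mono) (auto simp: cos_60)
  then show ?thesis using z by simp
qed simp

lemma cmod_one_minus_exp_ge:
  assumes "\<bar>x\<bar> \<le> pi"
  shows "\<bar>x\<bar> / (2 * pi) \<le> cmod (1 - exp (\<i> * complex_of_real x))"
proof -
  let ?z = "1 - exp (\<i> * complex_of_real x)"
  have "\<bar>x\<bar> / (2 * pi) \<le> \<bar>x\<bar> / 2"
    using pi_ge_two by (intro divide_left_mono) auto
  show ?thesis
  proof (cases "\<bar>x\<bar> \<le> pi / 3")
    case True
    have "\<bar>x\<bar> / 2 \<le> sin \<bar>x\<bar>" using True by (intro sin_ge_half_self) auto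
    also have "sin \<bar>x\<bar> = \<bar>Im ?z\<bar>"
      using sin_ge_zero[of x] sin_ge_zero[of "-x"] assms by (cases "x \<ge> 0") (auto simp: Im_exp)
    also have "\<dots> \<le> cmod ?z" by (rule abs_Im_le_cmod)
    finally show ?thesis using \<open>\<bar>x\<bar> / (2 * pi) \<le> \<bar>x\<bar> / 2\<close> by linarith
  next
    case False
    have "cos \<bar>x\<bar> \<le> cos (pi / 3)"
      using False assms by (intro cos_monotone_0_pi_le) auto
    then have "1 / 2 \<le> \<bar>Re ?z\<bar>" by (simp add: Re_exp cos_60)
    also have "\<dots> \<le> cmod ?z" by (rule abs_Re_le_cmod)
    moreover have "\<bar>x\<bar> / (2 * pi) \<le> 1 / 2" using assms by (simp add: field_simps)
    ultimately show ?thesis by linarith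
  qed
qed

lemma cmod_one_minus_exp_le:
  assumes "0 \<le> r" "r < 1"
  shows "1 - r \<le> cmod (1 - complex_of_real r * exp (\<i> * complex_of_real x))"
    and "cmod (1 - exp (\<i> * complex_of_real x))
           \<le> 2 * cmod (1 - complex_of_real r * exp (\<i> * complex_of_real x))"
proof -
  let ?E = "exp (\<i> * complex_of_real x)"
  have norm_E: "cmod ?E = 1" by (simp add: norm_exp_eq_Re)
  show lower: "1 - r \<le> cmod (1 - complex_of_real r * ?E)"
    using norm_triangle_ineq2[of 1 "complex_of_real r * ?E"] assms by (simp add: norm_mult norm_E)
  have "cmod (1 - ?E) \<le> cmod (1 - complex_of_real r * ?E) + cmod (complex_of_real r * ?E - ?E)"
    using norm_triangle_ineq[of "1 - complex_of_real r * ?E" "complex_of_real r * ?E - ?E"] by simp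
  also have "cmod (complex_of_real r * ?E - ?E) = 1 - r"
  proof -
    have "complex_of_real r * ?E - ?E = complex_of_real (r - 1) * ?E" by (simp add: algebra_simps)
    then show ?thesis using assms by (simp only: norm_mult norm_E norm_of_real) simp
  qed
  finally show "cmod (1 - ?E) \<le> 2 * cmod (1 - complex_of_real r * ?E)" using lower by simp
qed

text \<open>frac_density e r x = |1 - r e^(ix)|^(-2e). The spectral density of ARFIMA(0,e,0) is a
  multiple of frac_density e 1; the densities with r < 1 are its Abel regularisation.\<close>

definition frac_density :: "real \<Rightarrow> real \<Rightarrow> real \<Rightarrow> real" where
  "frac_density e r x = cmod (1 - complex_of_real r * exp (\<i> * complex_of_real x)) powr (- 2 * e)"

lemma frac_density_nonneg: "0 \<le> frac_density e r x"
  by (simp add: frac_density_def)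

lemma frac_density_measurable [measurable]: "frac_density e r \<in> borel_measurable borel"
  unfolding frac_density_def by measurable

lemma frac_density_le_abs_powr:
  assumes "0 < e" "\<bar>x\<bar> \<le> pi"
  shows "frac_density e 1 x \<le> (2 * pi) powr (2 * e) * \<bar>x\<bar> powr (- 2 * e)"
proof (cases "x = 0")
  case True then show ?thesis by (simp add: frac_density_def)
next
  case False
  have "frac_density e 1 x \<le> (\<bar>x\<bar> / (2 * pi)) powr (- 2 * e)"
    unfolding frac_density_def using assms False cmod_one_minus_exp_ge[OF assms(2)]
    by (intro powr_mono2') auto
  also have "\<dots> = \<bar>x\<bar> powr (- 2 * e) / (2 * pi) powr (- 2 * e)"
    by (rule powr_divide)
  also have "\<dots> = (2 * pi) powr (2 * e) * \<bar>x\<bar> powr (- 2 * e)"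
    by (simp add: powr_minus divide_inverse)
  finally show ?thesis .
qed

lemma frac_density_le_twice:
  assumes "0 \<le> e" "0 \<le> r" "r < 1" "exp (\<i> * complex_of_real x) \<noteq> 1"
  shows "frac_density e r x \<le> 2 powr (2 * e) * frac_density e 1 x"
proof -
  have "0 < cmod (1 - exp (\<i> * complex_of_real x)) / 2" using assms(4) by simp
  then have "frac_density e r x \<le> (cmod (1 - exp (\<i> * complex_of_real x)) / 2) powr (- 2 * e)"
    unfolding frac_density_def using cmod_one_minus_exp_le(2)[OF assms(2,3), of x] assms(1)
    by (intro powr_mono2') auto
  also have "\<dots> = cmod (1 - exp (\<i> * complex_of_real x)) powr (- 2 * e) / 2 powr (- 2 * e)"
    by (rule powr_divide)
  also have "\<dots> = 2 powr (2 * e) * frac_density e 1 x"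
    unfolding frac_density_def by (simp add: powr_minus divide_inverse)
  finally show ?thesis .
qed

abbreviation Ipi :: "real set" where
  "Ipi \<equiv> {-pi<..pi}"

lemma exp_ne_one_Ipi:
  assumes "x \<in> Ipi" "x \<noteq> 0"
  shows "exp (\<i> * complex_of_real x) \<noteq> 1"
proof -
  have "\<bar>x\<bar> \<le> pi" using assms by auto
  moreover have "0 < \<bar>x\<bar> / (2 * pi)" using assms(2) by simp
  ultimately have "0 < cmod (1 - exp (\<i> * complex_of_real x))"
    using cmod_one_minus_exp_ge by (meson order_less_le_trans)
  then show ?thesis by auto
qed

lemma set_integrable_abs_powr_Ipi:
  assumes "a > -1"
  shows "set_integrable lborel Ipi (\<lambda>x. \<bar>x\<bar> powr a)"
proof -
  have "(\<lambda>x. x powr a) integrable_on {0<..pi}"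
    by (rule integrable_on_powr_from_0'[OF assms]) simp
  then have "integrable lebesgue (\<lambda>x. indicator {0<..pi} x *\<^sub>R (x powr a))"
    unfolding set_integrable_def[symmetric] by (rule nonnegative_absolutely_integrable_1) simp
  then have right: "integrable lborel (\<lambda>x. indicator {0<..pi} x *\<^sub>R (x powr a))"
    by (subst (asm) integrable_completion) auto
  then have left: "integrable lborel (\<lambda>x. indicator {0<..pi} (0 + (-1) * x) *\<^sub>R ((0 + (-1) * x) powr a))"
    by (subst lborel_integrable_real_affine_iff) auto
  have pos: "set_integrable lborel {0<..pi} (\<lambda>x. \<bar>x\<bar> powr a)"
    unfolding set_integrable_def
    by (rule Bochner_Integration.integrable_cong[THEN iffD1, OF refl _ right]) (auto split: split_indicator)
  have neg: "set_integrable lborel {-pi..<0} (\<lambda>x. \<bar>x\<bar> powr a)"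
    unfolding set_integrable_def
    by (rule Bochner_Integration.integrable_cong[THEN iffD1, OF refl _ left]) (auto split: split_indicator)
  have "set_integrable lborel ({-pi<..<0} \<union> {0<..pi}) (\<lambda>x. \<bar>x\<bar> powr a)"
    by (rule set_integrable_Un[OF set_integrable_subset[OF neg] pos]) auto
  then show ?thesis
    unfolding set_integrable_def
    by (rule Bochner_Integration.integrable_cong[THEN iffD1, OF refl, rotated]) (auto split: split_indicator)
qed

lemma frac_density_integrable:
  assumes "0 < e" "e < 1/2"
  shows "set_integrable lborel Ipi (frac_density e 1)"
  unfolding set_integrable_def
proof (rule Bochner_Integration.integrable_bound)
  show "integrable lborel (\<lambda>x. indicator Ipi x *\<^sub>R ((2 * pi) powr (2 * e) * \<bar>x\<bar> powr (- 2 * e)))"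
    using integrable_mult_right[OF set_integrable_abs_powr_Ipi[of "- 2 * e", unfolded set_integrable_def],
        of "(2 * pi) powr (2 * e)"] assms
    by (simp add: mult.left_commute)
  show "(\<lambda>x. indicator Ipi x *\<^sub>R frac_density e 1 x) \<in> borel_measurable lborel"
    by measurable
  show "AE x in lborel. norm (indicator Ipi x *\<^sub>R frac_density e 1 x)
          \<le> norm (indicator Ipi x *\<^sub>R ((2 * pi) powr (2 * e) * \<bar>x\<bar> powr (- 2 * e)))"
    using frac_density_le_abs_powr[OF assms(1)] frac_density_nonneg by (auto split: split_indicator)
qed

definition fourier_exp :: "real \<Rightarrow> int \<Rightarrow> complex" where
  "fourier_exp x m = exp (\<i> * complex_of_real x * of_int m)"

lemma fourier_exp_add: "fourier_exp x (a + b) = fourier_exp x a * fourier_exp x b"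
  by (simp add: fourier_exp_def distrib_left exp_add)

lemma norm_fourier_exp [simp]: "norm (fourier_exp x m) = 1"
  by (simp add: fourier_exp_def norm_exp_eq_Re)

lemma cnj_fourier_exp: "cnj (fourier_exp x m) = fourier_exp x (- m)"
  by (simp add: fourier_exp_def exp_cnj)

lemma continuous_on_fourier_exp [continuous_intros]: "continuous_on S (\<lambda>x. fourier_exp x m)"
  unfolding fourier_exp_def by (intro continuous_intros)

lemma fourier_exp_measurable [measurable]: "(\<lambda>x. fourier_exp x m) \<in> borel_measurable borel"
  unfolding fourier_exp_def by measurable

lemma exp_power_eq_fourier_exp: "exp (\<i> * complex_of_real x) ^ j = fourier_exp x (int j)"
  by (simp add: fourier_exp_def exp_of_nat_mult[symmetric] mult_ac)

lemma set_integral_fourier_exp: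
  "(LINT x:Ipi|lborel. fourier_exp x m) = (if m = 0 then 2 * pi else 0)"
proof -
  have "(LINT x:Ipi|lborel. fourier_exp x m) = (LBINT x=-pi..pi. fourier_exp x m)"
    by (subst interval_integral_Ioc) auto
  also have "\<dots> = (if m = 0 then 2 * pi else 0)"
  proof (cases "m = 0")
    case True
    have "(LBINT x=-pi..pi. fourier_exp x m) = (LBINT x=-pi..pi. 1)"
      using True by (simp add: fourier_exp_def)
    also have "\<dots> = complex_of_real pi - complex_of_real (- pi)"
      by (rule interval_integral_FTC_finite[where F = "\<lambda>x. complex_of_real x"])
         (auto intro!: derivative_eq_intros continuous_intros)
    finally show ?thesis using True by simp
  next
    case False
    define F where "F z = exp (\<i> * z * of_int m) / (\<i> * of_int m)" for z :: complex
    have "(LBINT x=-pi..pi. fourier_exp x m) = F (of_real pi) - F (of_real (- pi))"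
    proof (rule interval_integral_FTC_finite[where F = "\<lambda>x. F (of_real x)"])
      show "continuous_on {min (- pi) pi..max (- pi) pi} (\<lambda>x. fourier_exp x m)"
        by (intro continuous_intros)
      fix x
      have "(F has_field_derivative fourier_exp x m) (at (of_real x))"
        using False unfolding F_def fourier_exp_def by (auto intro!: derivative_eq_intros)
      then show "((\<lambda>x. F (of_real x)) has_vector_derivative fourier_exp x m)
          (at x within {min (- pi) pi..max (- pi) pi})"
        by (rule has_vector_derivative_real_field)
    qed
    also have "F (of_real pi) = F (of_real (- pi))"
    proof -
      have cis: "exp (\<i> * complex_of_real t * of_int m) = cis (t * of_int m)" for t
        by (simp add: cis_conv_exp mult.assoc)
      have "exp (\<i> * complex_of_real pi * of_int m) = exp (\<i> * complex_of_real (- pi) * of_int m)"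
        unfolding cis by (simp add: complex_eq_iff)
      then show ?thesis unfolding F_def by simp
    qed
    finally show ?thesis using False by simp
  qed
  finally show ?thesis .
qed

lemma set_integrable_Ipi_continuous:
  fixes f :: "real \<Rightarrow> complex"
  assumes "continuous_on {-pi..pi} f"
  shows "set_integrable lborel Ipi f"
proof -
  have "set_integrable lborel {-pi..pi} f"
    unfolding set_integrable_def by (rule borel_integrable_compact[OF _ assms]) simp
  then show ?thesis by (rule set_integrable_subset) auto
qed

lemma sums_set_integral:
  fixes f :: "nat \<Rightarrow> 'a \<Rightarrow> 'b::{banach, second_countable_topology}"
  assumes A: "A \<in> sets M" "emeasure M A < \<infinity>"
    and integrable: "\<And>l. set_integrable M A (f l)"
    and bound: "\<And>l x. x \<in> A \<Longrightarrow> norm (f l x) \<le> c l"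
    and "summable c"
    and sums: "\<And>x. x \<in> A \<Longrightarrow> (\<lambda>l. f l x) sums g x"
  shows "(\<lambda>l. LINT x:A|M. f l x) sums (LINT x:A|M. g x)"
proof -
  let ?F = "\<lambda>l x. indicator A x *\<^sub>R f l x"
  have "(\<lambda>l. integral\<^sup>L M (?F l)) sums (\<integral>x. (\<Sum>l. ?F l x) \<partial>M)"
  proof (rule sums_integral)
    show "integrable M (?F l)" for l using integrable[of l] by (simp add: set_integrable_def)
    show "AE x in M. summable (\<lambda>l. norm (?F l x))"
    proof (rule AE_I2)
      fix x show "summable (\<lambda>l. norm (?F l x))"
      proof (cases "x \<in> A")
        case True
        then show ?thesis
          using bound by (intro summable_comparison_test'[OF \<open>summable c\<close>, of 0]) simp
      qed simp
    qed
    have "(\<integral>x. norm (?F l x) \<partial>M) \<le> (\<integral>x. c l * indicator A x \<partial>M)" for l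
    proof (rule integral_mono)
      show "integrable M (\<lambda>x. norm (?F l x))"
        using integrable[of l] by (intro integrable_norm) (simp add: set_integrable_def)
      show "integrable M (\<lambda>x. c l * indicator A x :: real)"
        using A by (intro integrable_mult_right integrable_real_indicator) auto
      show "norm (?F l x) \<le> c l * indicator A x" for x
        using bound[of x l] by (auto split: split_indicator)
    qed
    then have "norm (\<integral>x. norm (?F l x) \<partial>M) \<le> c l * measure M A" for l
      using A by simp
    then show "summable (\<lambda>l. \<integral>x. norm (?F l x) \<partial>M)"
      by (rule summable_comparison_test'[OF summable_mult2[OF \<open>summable c\<close>]])
  qed
  moreover have "(\<Sum>l. ?F l x) = indicator A x *\<^sub>R g x" for x
  proof (cases "x \<in> A")
    case True
    then show ?thesis using sums[OF True] by (simp add: sums_iff)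
  qed simp
  ultimately show ?thesis by (simp add: set_lebesgue_integral_def)
qed

definition abel_coeff :: "real \<Rightarrow> real \<Rightarrow> nat \<Rightarrow> real" where
  "abel_coeff e r j = ma_coeff e j * r ^ j"

definition frac_transfer :: "real \<Rightarrow> real \<Rightarrow> real \<Rightarrow> complex" where
  "frac_transfer e r x = (1 - complex_of_real r * exp (\<i> * complex_of_real x)) powr (- complex_of_real e)"

definition abel_acov :: "real \<Rightarrow> real \<Rightarrow> nat \<Rightarrow> real" where
  "abel_acov e r m = (\<Sum>j. abel_coeff e r j * abel_coeff e r (j + m))"

lemma abel_coeff_nonneg: "0 \<le> e \<Longrightarrow> 0 \<le> r \<Longrightarrow> 0 \<le> abel_coeff e r j"
  by (simp add: abel_coeff_def ma_coeff_nonneg)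

lemma abel_coeff_le_power:
  assumes "0 \<le> e" "e \<le> 1" "0 \<le> r"
  shows "abel_coeff e r j \<le> r ^ j"
  using decseqD[OF decseq_ma_coeff[OF assms(1,2)], of 0 j] ma_coeff_nonneg[OF assms(1), of j] assms(3)
  unfolding abel_coeff_def by (simp add: mult_left_le_one_le)

lemma summable_abel_coeff:
  assumes "0 \<le> e" "e \<le> 1" "0 \<le> r" "r < 1"
  shows "summable (abel_coeff e r)"
  using abel_coeff_le_power[OF assms(1-3)] abel_coeff_nonneg[OF assms(1,3)]
  by (intro summable_comparison_test'[OF summable_geometric[of r], of 0]) (simp_all add: assms)

lemma summable_abel_acov:
  assumes "0 \<le> e" "e \<le> 1" "0 \<le> r" "r < 1"
  shows "summable (\<lambda>j. abel_coeff e r j * abel_coeff e r (j + m))"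
proof (rule summable_comparison_test'[OF summable_abel_coeff[OF assms], of 0])
  fix j
  have "abel_coeff e r (j + m) \<le> 1"
    using abel_coeff_le_power[OF assms(1-3), of "j + m"] power_le_one[of r "j + m"] assms by linarith
  then show "norm (abel_coeff e r j * abel_coeff e r (j + m)) \<le> abel_coeff e r j"
    using abel_coeff_nonneg[OF assms(1,3)] by (simp add: mult_left_le)
qed

lemma frac_transfer_sums:
  assumes "0 \<le> r" "r < 1"
  shows "(\<lambda>j. complex_of_real (abel_coeff e r j) * fourier_exp x (int j)) sums frac_transfer e r x"
proof -
  have "norm (complex_of_real r * exp (\<i> * complex_of_real x)) < 1"
    using assms by (simp add: norm_mult norm_exp_eq_Re)
  from ma_coeff_sums[OF this, of e] show ?thesis
    by (simp add: frac_transfer_def abel_coeff_def power_mult_distrib exp_power_eq_fourier_exp mult_ac)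
qed

lemma norm_frac_transfer:
  assumes "0 \<le> r" "r < 1"
  shows "norm (frac_transfer e r x) = cmod (1 - complex_of_real r * exp (\<i> * complex_of_real x)) powr (- e)"
  unfolding frac_transfer_def by (subst norm_powr_real_powr') auto

lemma norm_frac_transfer_le:
  assumes "0 \<le> e" "0 \<le> r" "r < 1"
  shows "norm (frac_transfer e r x) \<le> (1 - r) powr (- e)"
  unfolding norm_frac_transfer[OF assms(2,3)]
  using cmod_one_minus_exp_le(1)[OF assms(2,3), of x] assms by (intro powr_mono2') auto

lemma frac_density_eq_frac_transfer_cnj:
  assumes "0 \<le> r" "r < 1"
  shows "complex_of_real (frac_density e r x) = frac_transfer e r x * cnj (frac_transfer e r x)"
proof -
  have "frac_transfer e r x * cnj (frac_transfer e r x) = complex_of_real ((norm (frac_transfer e r x))\<^sup>2)"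
    by (rule complex_norm_square[symmetric])
  also have "(norm (frac_transfer e r x))\<^sup>2 = frac_density e r x"
    unfolding norm_frac_transfer[OF assms] frac_density_def by (simp add: power2_eq_square powr_add[symmetric])
  finally show ?thesis by simp
qed

text \<open>For r < 1 the base 1 - r e^(ix) stays in the right half plane, away from the branch cut
  of powr.\<close>

lemma continuous_on_frac_transfer:
  assumes "0 \<le> r" "r < 1"
  shows "continuous_on S (frac_transfer e r)"
proof -
  have "Re (complex_of_real r * exp (\<i> * complex_of_real x)) \<le> r" for x
    using complex_Re_le_cmod[of "complex_of_real r * exp (\<i> * complex_of_real x)"] assms
    by (simp add: norm_mult norm_exp_eq_Re)
  then have pos: "0 < Re (1 - complex_of_real r * exp (\<i> * complex_of_real x))" for x
    using assms by (smt (verit) minus_complex.sel(1) one_complex.sel(1))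
  then have "1 - complex_of_real r * exp (\<i> * complex_of_real x) \<noteq> 0" for x
    by (metis zero_complex.sel(1) less_irrefl)
  with pos show ?thesis unfolding frac_transfer_def
    by (intro continuous_on_powr_complex continuous_intros) (auto simp: less_imp_le)
qed

lemma sums_if_int_eq:
  fixes a :: "nat \<Rightarrow> 'a::real_normed_vector"
  shows "(\<lambda>j. if int j = n then a j else 0) sums (if 0 \<le> n then a (nat n) else 0)"
proof (cases "0 \<le> n")
  case True
  then have "(\<lambda>j. if int j = n then a j else 0) = (\<lambda>j. if j = nat n then a (nat n) else 0)"
    by (auto simp: fun_eq_iff)
  then show ?thesis using True sums_single[of "nat n" "\<lambda>_. a (nat n)"] by simp
next
  case False
  then have "(\<lambda>j. if int j = n then a j else 0) = (\<lambda>j. 0)" by (auto simp: fun_eq_iff)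
  then show ?thesis using False by simp
qed

lemma set_integral_fourier_frac_transfer:
  assumes "0 \<le> e" "e \<le> 1" "0 \<le> r" "r < 1"
  shows "(LINT x:Ipi|lborel. fourier_exp x m * frac_transfer e r x)
       = complex_of_real (if m \<le> 0 then 2 * pi * abel_coeff e r (nat (- m)) else 0)"
proof -
  let ?f = "\<lambda>j x. complex_of_real (abel_coeff e r j) * fourier_exp x (m + int j)"
  have "(\<lambda>j. LINT x:Ipi|lborel. ?f j x) sums (LINT x:Ipi|lborel. fourier_exp x m * frac_transfer e r x)"
  proof (rule sums_set_integral)
    show "set_integrable lborel Ipi (?f j)" for j
      by (intro set_integrable_Ipi_continuous continuous_intros)
    show "norm (?f j x) \<le> abel_coeff e r j" for j x
      using abel_coeff_nonneg[OF assms(1,3)] by (simp add: norm_mult)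
    show "summable (abel_coeff e r)" by (rule summable_abel_coeff[OF assms])
    show "(\<lambda>j. ?f j x) sums (fourier_exp x m * frac_transfer e r x)" for x
      using sums_mult[OF frac_transfer_sums[OF assms(3,4), of e x], of "fourier_exp x m"]
      by (simp add: fourier_exp_add mult_ac)
  qed auto
  moreover have "(LINT x:Ipi|lborel. ?f j x)
      = (if int j = - m then complex_of_real (2 * pi * abel_coeff e r j) else 0)" for j
    using set_integral_fourier_exp[of "m + int j"] by auto
  ultimately have "(\<lambda>j. if int j = - m then complex_of_real (2 * pi * abel_coeff e r j) else 0)
      sums (LINT x:Ipi|lborel. fourier_exp x m * frac_transfer e r x)"
    by simp
  from sums_unique2[OF this sums_if_int_eq] show ?thesis by auto
qed

lemma sums_abel_acov_shift:
  assumes "0 \<le> e" "e \<le> 1" "0 \<le> r" "r < 1"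
  shows "(\<lambda>l. abel_coeff e r l * (if k \<le> int l then abel_coeff e r (nat (int l - k)) else 0))
           sums abel_acov e r (nat \<bar>k\<bar>)"
proof -
  let ?g = "\<lambda>l. abel_coeff e r l * (if k \<le> int l then abel_coeff e r (nat (int l - k)) else 0)"
  have acov: "(\<lambda>j. abel_coeff e r j * abel_coeff e r (j + nat \<bar>k\<bar>)) sums abel_acov e r (nat \<bar>k\<bar>)"
    unfolding abel_acov_def by (intro summable_sums summable_abel_acov[OF assms])
  show ?thesis
  proof (cases "0 \<le> k")
    case True
    have "(\<lambda>j. ?g (j + nat k)) = (\<lambda>j. abel_coeff e r j * abel_coeff e r (j + nat \<bar>k\<bar>))"
      using True by (auto simp: fun_eq_iff nat_add_distrib mult.commute add.commute)
    with acov have "(\<lambda>j. ?g (j + nat k)) sums abel_acov e r (nat \<bar>k\<bar>)" by simp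
    moreover have "?g i = 0" if "i < nat k" for i using that by auto
    ultimately show ?thesis by (subst (asm) sums_zero_iff_shift) auto
  next
    case False
    then have "nat (int j - k) = j + nat \<bar>k\<bar>" for j by simp
    with False have "?g = (\<lambda>j. abel_coeff e r j * abel_coeff e r (j + nat \<bar>k\<bar>))"
      by (auto simp: fun_eq_iff)
    with acov show ?thesis by simp
  qed
qed

text \<open>Writing frac_density e r = |frac_transfer e r|^2 and expanding the conjugate factor as a
  power series, the Fourier coefficients become the autocovariances of the damped coefficient
  sequence.\<close>

lemma fourier_exp_frac_density_sums:
  assumes "0 \<le> r" "r < 1"
  shows "(\<lambda>l. complex_of_real (abel_coeff e r l) * (fourier_exp x (k - int l) * frac_transfer e r x))
           sums (fourier_exp x k * complex_of_real (frac_density e r x))"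
proof -
  have "(\<lambda>l. cnj (complex_of_real (abel_coeff e r l) * fourier_exp x (int l))) sums cnj (frac_transfer e r x)"
    using frac_transfer_sums[OF assms, of e x] by (subst sums_cnj)
  then have "(\<lambda>l. (fourier_exp x k * frac_transfer e r x) * (complex_of_real (abel_coeff e r l) * fourier_exp x (- int l)))
      sums ((fourier_exp x k * frac_transfer e r x) * cnj (frac_transfer e r x))"
    by (intro sums_mult) (simp add: cnj_fourier_exp)
  moreover have "fourier_exp x (k - int l) = fourier_exp x k * fourier_exp x (- int l)" for l
    using fourier_exp_add[of x k "- int l"] by simp
  ultimately show ?thesis
    by (simp add: frac_density_eq_frac_transfer_cnj[OF assms] mult_ac)
qed

lemma set_integral_fourier_frac_density_abel:
  assumes "0 \<le> e" "e \<le> 1" "0 \<le> r" "r < 1"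
  shows "(LINT x:Ipi|lborel. fourier_exp x k * complex_of_real (frac_density e r x))
       = complex_of_real (2 * pi * abel_acov e r (nat \<bar>k\<bar>))"
proof -
  let ?f = "\<lambda>l x. complex_of_real (abel_coeff e r l) * (fourier_exp x (k - int l) * frac_transfer e r x)"
  have series: "(\<lambda>l. LINT x:Ipi|lborel. ?f l x)
      sums (LINT x:Ipi|lborel. fourier_exp x k * complex_of_real (frac_density e r x))"
  proof (rule sums_set_integral)
    show "set_integrable lborel Ipi (?f l)" for l
      by (intro set_integrable_Ipi_continuous continuous_intros continuous_on_frac_transfer[OF assms(3,4)])
    show "norm (?f l x) \<le> abel_coeff e r l * (1 - r) powr (- e)" for l x
      using abel_coeff_nonneg[OF assms(1,3), of l] norm_frac_transfer_le[OF assms(1,3,4), of x]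
      by (simp add: norm_mult mult_left_mono)
    show "summable (\<lambda>l. abel_coeff e r l * (1 - r) powr (- e))"
      by (intro summable_mult2 summable_abel_coeff[OF assms])
    show "(\<lambda>l. ?f l x) sums (fourier_exp x k * complex_of_real (frac_density e r x))" for x
      by (rule fourier_exp_frac_density_sums[OF assms(3,4)])
  qed auto
  have terms: "(LINT x:Ipi|lborel. ?f l x) = complex_of_real (2 * pi *
      (abel_coeff e r l * (if k \<le> int l then abel_coeff e r (nat (int l - k)) else 0)))" for l
  proof -
    have "(LINT x:Ipi|lborel. ?f l x) = complex_of_real (abel_coeff e r l)
        * (LINT x:Ipi|lborel. fourier_exp x (k - int l) * frac_transfer e r x)"
      by (rule set_integral_mult_right)
    then show ?thesis
      using set_integral_fourier_frac_transfer[OF assms, of "k - int l"] by (simp add: mult_ac)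
  qed
  have "(\<lambda>l. complex_of_real (2 * pi *
      (abel_coeff e r l * (if k \<le> int l then abel_coeff e r (nat (int l - k)) else 0))))
      sums complex_of_real (2 * pi * abel_acov e r (nat \<bar>k\<bar>))"
    unfolding sums_of_real_iff by (intro sums_mult sums_abel_acov_shift[OF assms])
  with series show ?thesis
    unfolding terms by (rule sums_unique2)
qed

lemma abel_acov_tendsto:
  assumes "0 \<le> e" "e < 1/2" "r \<longlonglongrightarrow> 1" "\<And>n. 0 \<le> r n" "\<And>n. r n \<le> 1"
  shows "(\<lambda>n. abel_acov e (r n) m) \<longlonglongrightarrow> acov e m"
proof -
  have "(\<lambda>n. \<Sum>j. abel_coeff e (r n) j * abel_coeff e (r n) (j + m))
      \<longlonglongrightarrow> (\<Sum>j. ma_coeff e j * ma_coeff e (j + m))"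
  proof (rule tannerys_theorem[THEN conjunct2, THEN conjunct2])
    show "(\<lambda>n. abel_coeff e (r n) j * abel_coeff e (r n) (j + m)) \<longlonglongrightarrow> ma_coeff e j * ma_coeff e (j + m)"
      for j
    proof -
      have "(\<lambda>n. abel_coeff e (r n) j * abel_coeff e (r n) (j + m))
          \<longlonglongrightarrow> ma_coeff e j * 1 ^ j * (ma_coeff e (j + m) * 1 ^ (j + m))"
        unfolding abel_coeff_def by (intro tendsto_intros assms(3))
      then show ?thesis by simp
    qed
    have "\<bar>abel_coeff e (r n) j * abel_coeff e (r n) (j + m)\<bar> \<le> ma_coeff e j * ma_coeff e (j + m)" for n j
    proof -
      have "r n ^ j \<le> 1" "r n ^ (j + m) \<le> 1"
        using assms(4,5) by (simp_all add: power_le_one)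
      then show ?thesis
        unfolding abel_coeff_def using ma_coeff_nonneg[OF assms(1)] assms(4)
        by (simp add: abs_mult mult_mono mult_left_le)
    qed
    then show "\<forall>\<^sub>F (j, n) in at_top \<times>\<^sub>F sequentially.
        norm (abel_coeff e (r n) j * abel_coeff e (r n) (j + m)) \<le> ma_coeff e j * ma_coeff e (j + m)"
      by (intro always_eventually) auto
    show "summable (\<lambda>j. ma_coeff e j * ma_coeff e (j + m))"
      by (rule summable_acov[OF assms(1,2)])
  qed simp
  then show ?thesis unfolding abel_acov_def acov_def .
qed

lemma frac_density_tendsto:
  assumes "r \<longlonglongrightarrow> 1" "exp (\<i> * complex_of_real x) \<noteq> 1"
  shows "(\<lambda>n. frac_density e (r n) x) \<longlonglongrightarrow> frac_density e 1 x"
proof -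
  have "(\<lambda>n. cmod (1 - complex_of_real (r n) * exp (\<i> * complex_of_real x)))
      \<longlonglongrightarrow> cmod (1 - complex_of_real 1 * exp (\<i> * complex_of_real x))"
    by (intro tendsto_intros assms(1))
  moreover have "cmod (1 - complex_of_real 1 * exp (\<i> * complex_of_real x)) \<noteq> 0"
    using assms(2) by simp
  ultimately show ?thesis
    unfolding frac_density_def by (rule tendsto_powr[OF _ tendsto_const])
qed

lemma set_integral_fourier_frac_density_tendsto:
  assumes "0 < e" "e < 1/2" "r \<longlonglongrightarrow> 1" "\<And>n. 0 \<le> r n" "\<And>n. r n < 1"
  shows "(\<lambda>n. LINT x:Ipi|lborel. fourier_exp x k * complex_of_real (frac_density e (r n) x))
           \<longlonglongrightarrow> (LINT x:Ipi|lborel. fourier_exp x k * complex_of_real (frac_density e 1 x))"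
  unfolding set_lebesgue_integral_def
proof (rule integral_dominated_convergence[where w = "\<lambda>x. indicator Ipi x * (2 powr (2 * e) * frac_density e 1 x)"])
  show "integrable lborel (\<lambda>x. indicator Ipi x * (2 powr (2 * e) * frac_density e 1 x))"
    using integrable_mult_right[OF frac_density_integrable[OF assms(1,2), unfolded set_integrable_def],
        of "2 powr (2 * e)"]
    by (simp add: mult_ac)
  show "AE x in lborel. (\<lambda>n. indicator Ipi x *\<^sub>R (fourier_exp x k * complex_of_real (frac_density e (r n) x)))
      \<longlonglongrightarrow> indicator Ipi x *\<^sub>R (fourier_exp x k * complex_of_real (frac_density e 1 x))"
    using AE_lborel_singleton[of 0]
  proof eventually_elim
    case (elim x)
    show ?case
    proof (cases "x \<in> Ipi")
      case True
      then show ?thesis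
        using frac_density_tendsto[OF assms(3) exp_ne_one_Ipi[OF True elim]]
        by (intro tendsto_intros)
    qed simp
  qed
  show "AE x in lborel. norm (indicator Ipi x *\<^sub>R (fourier_exp x k * complex_of_real (frac_density e (r n) x)))
      \<le> indicator Ipi x * (2 powr (2 * e) * frac_density e 1 x)" for n
    using AE_lborel_singleton[of 0]
  proof eventually_elim
    case (elim x)
    show ?case
    proof (cases "x \<in> Ipi")
      case True
      then show ?thesis
        using frac_density_le_twice[OF _ assms(4,5) exp_ne_one_Ipi[OF True elim], of e] assms(1)
          frac_density_nonneg[of e "r n" x]
        by (simp add: norm_mult)
    qed simp
  qed
qed measurable

lemma set_integral_fourier_frac_density:
  assumes "0 < e" "e < 1/2"
  shows "(LINT x:Ipi|lborel. fourier_exp x k * complex_of_real (frac_density e 1 x))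
       = complex_of_real (2 * pi * acov e (nat \<bar>k\<bar>))"
proof -
  define r where "r = (\<lambda>n. real n / real (Suc n))"
  have r: "r \<longlonglongrightarrow> 1" "0 \<le> r n" "r n < 1" for n
    unfolding r_def using LIMSEQ_n_over_Suc_n by simp_all
  have "(\<lambda>n. complex_of_real (2 * pi * abel_acov e (r n) (nat \<bar>k\<bar>)))
      \<longlonglongrightarrow> complex_of_real (2 * pi * acov e (nat \<bar>k\<bar>))"
    using assms r by (intro tendsto_intros abel_acov_tendsto) (auto intro: less_imp_le)
  moreover have "(\<lambda>n. complex_of_real (2 * pi * abel_acov e (r n) (nat \<bar>k\<bar>)))
      \<longlonglongrightarrow> (LINT x:Ipi|lborel. fourier_exp x k * complex_of_real (frac_density e 1 x))"
    using set_integral_fourier_frac_density_tendsto[OF assms r] assms r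
    by (simp add: set_integral_fourier_frac_density_abel less_imp_le)
  ultimately show ?thesis by (rule LIMSEQ_unique[symmetric])
qed

lemma arfima_sd_eq_frac_density: "arfima_sd s d x = s / (2 * pi) * frac_density d 1 x"
  by (simp add: arfima_sd_def frac_density_def)

lemma fcoeff_arfima_sd:
  assumes "0 < d" "d < 1/2"
  shows "fcoeff (arfima_sd s d) k = complex_of_real (s * acov d (nat \<bar>k\<bar>))"
proof -
  have "fcoeff (arfima_sd s d) k
      = (LINT x:Ipi|lborel. complex_of_real (s / (2 * pi)) * (fourier_exp x k * complex_of_real (frac_density d 1 x)))"
    unfolding fcoeff_def arfima_sd_eq_frac_density fourier_exp_def by (simp add: mult_ac)
  also have "\<dots> = complex_of_real (s / (2 * pi)) * complex_of_real (2 * pi * acov d (nat \<bar>k\<bar>))"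
    by (simp only: set_integral_mult_right set_integral_fourier_frac_density[OF assms])
  also have "\<dots> = complex_of_real (s * acov d (nat \<bar>k\<bar>))"
    unfolding of_real_mult[symmetric] by simp
  finally show ?thesis .
qed

lemma set_integral_frac_density:
  assumes "0 < e" "e < 1/2"
  shows "(LINT x:Ipi|lborel. frac_density e 1 x) = 2 * pi * acov e 0"
proof -
  have "complex_of_real (LINT x:Ipi|lborel. frac_density e 1 x)
      = (LINT x:Ipi|lborel. fourier_exp x 0 * complex_of_real (frac_density e 1 x))"
    by (simp add: fourier_exp_def set_integral_complex_of_real)
  also have "\<dots> = complex_of_real (2 * pi * acov e 0)"
    using set_integral_fourier_frac_density[OF assms, of 0] by simp
  finally show ?thesis by (simp only: of_real_eq_iff)
qed

lemma frac_density_mult: "frac_density a r x * frac_density b r x = frac_density (a + b) r x"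
  by (simp add: frac_density_def powr_add[symmetric] algebra_simps)

lemma frac_density_power:
  assumes "n \<ge> 1"
  shows "frac_density e r x ^ n = frac_density (real n * e) r x"
  using assms
proof (induction n rule: dec_induct)
  case (step n)
  then show ?case by (simp add: frac_density_mult algebra_simps)
qed simp

lemma integral_arfima_product_power:
  assumes "1 \<le> \<nu>" "0 < d1" "0 < d2" "real \<nu> * (d1 + d2) < 1/2"
  shows "(2 * pi) ^ (2 * \<nu> - 1) * (LINT x:Ipi|lborel. (arfima_sd s1 d1 x * arfima_sd s2 d2 x) ^ \<nu>)
       = (s1 * s2) ^ \<nu> * acov (real \<nu> * (d1 + d2)) 0"
proof -
  let ?c = "(s1 * s2 / (2 * pi)^2) ^ \<nu>"
  have "(arfima_sd s1 d1 x * arfima_sd s2 d2 x) ^ \<nu> = ?c * frac_density (real \<nu> * (d1 + d2)) 1 x" for x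
  proof -
    have "arfima_sd s1 d1 x * arfima_sd s2 d2 x = s1 * s2 / (2 * pi)^2 * frac_density (d1 + d2) 1 x"
      unfolding arfima_sd_eq_frac_density frac_density_mult[symmetric] by (simp add: power2_eq_square)
    then show ?thesis by (simp only: power_mult_distrib frac_density_power[OF assms(1)])
  qed
  then have "(LINT x:Ipi|lborel. (arfima_sd s1 d1 x * arfima_sd s2 d2 x) ^ \<nu>)
      = (LINT x:Ipi|lborel. ?c * frac_density (real \<nu> * (d1 + d2)) 1 x)"
    by simp
  also have "\<dots> = ?c * (2 * pi * acov (real \<nu> * (d1 + d2)) 0)"
    using assms by (simp add: set_integral_frac_density)
  finally have integral: "(LINT x:Ipi|lborel. (arfima_sd s1 d1 x * arfima_sd s2 d2 x) ^ \<nu>)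
      = ?c * (2 * pi * acov (real \<nu> * (d1 + d2)) 0)" .
  have "(2 * pi) ^ (2 * \<nu> - 1) * (2 * pi) = (2 * pi) ^ Suc (2 * \<nu> - 1)"
    by simp
  also have "\<dots> = ((2 * pi)^2) ^ \<nu>"
    using assms by (simp add: power_mult)
  finally have "(2 * pi) ^ (2 * \<nu> - 1) * (2 * pi) = ((2 * pi)^2) ^ \<nu>" .
  then show ?thesis
    unfolding integral by (simp add: power_divide field_simps)
qed

section \<open>Nonnegative kernels on \<open>\<int>\<close>\<close>

text \<open>Kernels are infinite matrices over \<int> with entries in [0, \<infinity>]; working in ennreal makes
  every product well defined and every rearrangement of sums legal.\<close>

type_synonym kernel = "int \<Rightarrow> int \<Rightarrow> ennreal"

definition kmult :: "kernel \<Rightarrow> kernel \<Rightarrow> kernel" where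
  "kmult K L s u = (\<integral>\<^sup>+t. K s t * L t u \<partial>count_space UNIV)"

definition kdiag :: "(int \<Rightarrow> ennreal) \<Rightarrow> kernel" where
  "kdiag w s u = (if s = u then w s else 0)"

abbreviation kone :: kernel where
  "kone \<equiv> kdiag (\<lambda>_. 1)"

fun kpow :: "kernel \<Rightarrow> nat \<Rightarrow> kernel" where
  "kpow K 0 = kone"
| "kpow K (Suc n) = kmult (kpow K n) K"

definition ktrans :: "kernel \<Rightarrow> kernel" where
  "ktrans K s u = K u s"

lemma kmult_assoc: "kmult (kmult K L) M = kmult K (kmult L M)"
proof (intro ext)
  fix s u
  have "kmult (kmult K L) M s u
      = (\<integral>\<^sup>+t. (\<integral>\<^sup>+t'. K s t' * L t' t * M t u \<partial>count_space UNIV) \<partial>count_space UNIV)"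
    unfolding kmult_def by (subst nn_integral_multc) auto
  also have "\<dots> = (\<integral>\<^sup>+t'. (\<integral>\<^sup>+t. K s t' * L t' t * M t u \<partial>count_space UNIV) \<partial>count_space UNIV)"
    by (rule nn_integral_count_space_nn_integral) auto
  also have "\<dots> = kmult K (kmult L M) s u"
    unfolding kmult_def by (subst nn_integral_cmult[symmetric]) (auto simp: mult.assoc)
  finally show "kmult (kmult K L) M s u = kmult K (kmult L M) s u" .
qed

lemma nn_integral_count_space_single:
  "(\<integral>\<^sup>+t. (if t = s then a else 0) \<partial>count_space UNIV) = a"
  using nn_integral_count_space'[of "{s}" UNIV "\<lambda>t. if t = s then a else 0"] by simp

lemma kmult_kdiag_left: "kmult (kdiag w) K s u = w s * K s u"
proof -
  have "kmult (kdiag w) K s u = (\<integral>\<^sup>+t. (if t = s then w s * K s u else 0) \<partial>count_space UNIV)"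
    unfolding kmult_def kdiag_def by (intro nn_integral_cong) auto
  then show ?thesis by (simp add: nn_integral_count_space_single)
qed

lemma kmult_kdiag_right: "kmult K (kdiag w) s u = K s u * w u"
proof -
  have "kmult K (kdiag w) s u = (\<integral>\<^sup>+t. (if t = u then K s u * w u else 0) \<partial>count_space UNIV)"
    unfolding kmult_def kdiag_def by (intro nn_integral_cong) auto
  then show ?thesis by (simp add: nn_integral_count_space_single)
qed

lemma kmult_kone_left [simp]: "kmult kone K = K"
  by (intro ext) (simp add: kmult_kdiag_left)

lemma kmult_kone_right [simp]: "kmult K kone = K"
  by (intro ext) (simp add: kmult_kdiag_right)

lemma kmult_add_left: "kmult (\<lambda>s u. K s u + K' s u) L = (\<lambda>s u. kmult K L s u + kmult K' L s u)"
  unfolding kmult_def by (intro ext) (simp add: distrib_right nn_integral_add)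

lemma kmult_add_right: "kmult L (\<lambda>s u. K s u + K' s u) = (\<lambda>s u. kmult L K s u + kmult L K' s u)"
  unfolding kmult_def by (intro ext) (simp add: distrib_left nn_integral_add)

lemma kmult_sum_left: "kmult (\<lambda>s u. \<Sum>j\<in>A. K j s u) L = (\<lambda>s u. \<Sum>j\<in>A. kmult (K j) L s u)"
  unfolding kmult_def by (intro ext) (simp add: sum_distrib_right nn_integral_sum)

lemma kmult_mono:
  "(\<And>s u. K s u \<le> K' s u) \<Longrightarrow> (\<And>s u. L s u \<le> L' s u) \<Longrightarrow> kmult K L s u \<le> kmult K' L' s u"
  unfolding kmult_def by (intro nn_integral_mono mult_mono) auto

lemma kmult_cmult:
  "kmult (\<lambda>s u. a * K s u) (\<lambda>s u. b * L s u) = (\<lambda>s u. (a * b) * kmult K L s u)"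
  unfolding kmult_def by (intro ext) (simp add: nn_integral_cmult[symmetric] mult_ac)

lemma kmult_ktrans: "kmult (ktrans K) (ktrans L) = ktrans (kmult L K)"
  unfolding kmult_def ktrans_def by (intro ext) (simp add: mult.commute)

lemma kpow_mono: "(\<And>s u. K s u \<le> K' s u) \<Longrightarrow> kpow K n s u \<le> kpow K' n s u"
  by (induction n arbitrary: s u) (simp_all add: kmult_mono)

lemma kmult_kpow: "kmult K (kpow K n) = kpow K (Suc n)"
proof (induction n)
  case (Suc n)
  have "kmult K (kpow K (Suc n)) = kmult (kmult K (kpow K n)) K" by (simp add: kmult_assoc)
  then show ?case using Suc by simp
qed simp

text \<open>ma_kernel e is the lower triangular Toeplitz kernel of the coefficients of (1 - z) powr -e;
  acov_kernel e = ma_kernel e * (ma_kernel e)^T is the infinite Toeplitz matrix of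
  frac_density e 1 / (2 pi).\<close>

definition ma_kernel :: "real \<Rightarrow> kernel" where
  "ma_kernel e s t = (if t \<le> s then ennreal (ma_coeff e (nat (s - t))) else 0)"

definition acov_kernel :: "real \<Rightarrow> kernel" where
  "acov_kernel e = kmult (ma_kernel e) (ktrans (ma_kernel e))"

lemma kmult_ma_kernel:
  assumes "0 \<le> a" "0 \<le> b"
  shows "kmult (ma_kernel a) (ma_kernel b) = ma_kernel (a + b)"
proof (intro ext)
  fix s u
  show "kmult (ma_kernel a) (ma_kernel b) s u = ma_kernel (a + b) s u"
  proof (cases "u \<le> s")
    case False
    then have "(\<lambda>t. ma_kernel a s t * ma_kernel b t u) = (\<lambda>_. 0)" by (auto simp: ma_kernel_def)
    then have "kmult (ma_kernel a) (ma_kernel b) s u = 0" unfolding kmult_def by simp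
    with False show ?thesis by (simp add: ma_kernel_def)
  next
    case True
    define n where "n = nat (s - u)"
    have "kmult (ma_kernel a) (ma_kernel b) s u = (\<Sum>t\<in>{u..s}. ma_kernel a s t * ma_kernel b t u)"
      unfolding kmult_def by (rule nn_integral_count_space') (auto simp: ma_kernel_def)
    also have "\<dots> = (\<Sum>k\<le>n. ma_kernel a s (s - int k) * ma_kernel b (s - int k) u)"
      by (rule sum.reindex_bij_witness[where i = "\<lambda>k. s - int k" and j = "\<lambda>t. nat (s - t)"])
         (use True in \<open>auto simp: n_def\<close>)
    also have "\<dots> = (\<Sum>k\<le>n. ennreal (ma_coeff a k * ma_coeff b (n - k)))"
    proof (rule sum.cong[OF refl])
      fix k assume "k \<in> {..n}"
      then have "u \<le> s - int k" "nat (s - int k - u) = n - k" using True by (auto simp: n_def)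
      then show "ma_kernel a s (s - int k) * ma_kernel b (s - int k) u
          = ennreal (ma_coeff a k * ma_coeff b (n - k))"
        using assms by (simp add: ma_kernel_def ennreal_mult' ma_coeff_nonneg)
    qed
    also have "\<dots> = ennreal (\<Sum>k\<le>n. ma_coeff a k * ma_coeff b (n - k))"
      using assms by (intro sum_ennreal) (simp add: ma_coeff_nonneg)
    also have "\<dots> = ma_kernel (a + b) s u"
      using True by (simp add: ma_kernel_def ma_coeff_add n_def)
    finally show ?thesis .
  qed
qed

text \<open>Toeplitz operators on \<int> commute; here this is the reflection t \<mapsto> s + u - t.\<close>

lemma kmult_ktrans_ma_kernel_commute:
  "kmult (ktrans (ma_kernel a)) (ma_kernel b) = kmult (ma_kernel b) (ktrans (ma_kernel a))"
proof (intro ext)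
  fix s u
  have bij: "bij_betw (\<lambda>t. s + u - t) (UNIV :: int set) UNIV"
    by (rule bij_betwI[where g = "\<lambda>t. s + u - t"]) auto
  have "kmult (ktrans (ma_kernel a)) (ma_kernel b) s u
      = (\<integral>\<^sup>+t. ma_kernel a t s * ma_kernel b t u \<partial>count_space UNIV)"
    unfolding kmult_def ktrans_def ..
  also have "\<dots> = (\<integral>\<^sup>+t. ma_kernel a (s + u - t) s * ma_kernel b (s + u - t) u \<partial>count_space UNIV)"
    by (rule nn_integral_bij_count_space[OF bij, symmetric])
  also have "\<dots> = kmult (ma_kernel b) (ktrans (ma_kernel a)) s u"
    unfolding kmult_def ktrans_def ma_kernel_def by (intro nn_integral_cong) (simp add: mult.commute)
  finally show "kmult (ktrans (ma_kernel a)) (ma_kernel b) s u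
      = kmult (ma_kernel b) (ktrans (ma_kernel a)) s u" .
qed

lemma kmult_acov_kernel:
  assumes "0 \<le> a" "0 \<le> b"
  shows "kmult (acov_kernel a) (acov_kernel b) = acov_kernel (a + b)"
proof -
  have "kmult (acov_kernel a) (acov_kernel b)
      = kmult (ma_kernel a) (kmult (kmult (ktrans (ma_kernel a)) (ma_kernel b)) (ktrans (ma_kernel b)))"
    unfolding acov_kernel_def by (simp add: kmult_assoc)
  also have "\<dots> = kmult (kmult (ma_kernel a) (ma_kernel b)) (kmult (ktrans (ma_kernel a)) (ktrans (ma_kernel b)))"
    unfolding kmult_ktrans_ma_kernel_commute by (simp add: kmult_assoc)
  also have "\<dots> = acov_kernel (a + b)"
    using assms by (simp add: acov_kernel_def kmult_ma_kernel kmult_ktrans add.commute)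
  finally show ?thesis .
qed

lemma acov_kernel_zero: "acov_kernel 0 = kone"
proof -
  have "ma_kernel 0 = kone"
    by (intro ext) (auto simp: ma_kernel_def kdiag_def ma_coeff_zero_exponent)
  then show ?thesis
    by (intro ext) (simp add: acov_kernel_def kmult_kdiag_left ktrans_def kdiag_def)
qed

lemma acov_kernel_eq:
  assumes "0 \<le> e" "e < 1/2"
  shows "acov_kernel e s u = ennreal (acov e (nat \<bar>s - u\<bar>))"
proof -
  have below: "acov_kernel e s u = ennreal (acov e (nat (s - u)))" if "u \<le> s" for s u
  proof -
    have "acov_kernel e s u = (\<integral>\<^sup>+t. ma_kernel e s t * ma_kernel e u t \<partial>count_space {..u})"
      unfolding acov_kernel_def kmult_def ktrans_def
      by (subst nn_integral_count_space_indicator)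
         (auto intro!: nn_integral_cong simp: ma_kernel_def split: split_indicator)
    also have "\<dots> = (\<integral>\<^sup>+j. ma_kernel e s (u - int j) * ma_kernel e u (u - int j) \<partial>count_space UNIV)"
      by (rule nn_integral_bij_count_space[symmetric])
         (rule bij_betwI[where g = "\<lambda>t. nat (u - t)"], auto)
    also have "\<dots> = (\<Sum>j. ennreal (ma_coeff e j * ma_coeff e (j + nat (s - u))))"
    proof -
      have "nat (s - (u - int j)) = j + nat (s - u)" for j using that by simp
      then show ?thesis
        unfolding nn_integral_count_space_nat using that assms
        by (intro suminf_cong) (auto simp: ma_kernel_def ennreal_mult' ma_coeff_nonneg mult.commute)
    qed
    also have "\<dots> = ennreal (acov e (nat (s - u)))"
      unfolding acov_def using assms by (intro suminf_ennreal2 summable_acov) (auto simp: ma_coeff_nonneg)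
    finally show ?thesis .
  qed
  show ?thesis
  proof (cases "u \<le> s")
    case False
    have "acov_kernel e s u = acov_kernel e u s"
      unfolding acov_kernel_def kmult_def ktrans_def by (simp add: mult.commute)
    with False below[of s u] show ?thesis by (simp add: abs_minus_commute)
  qed (simp add: below)
qed

definition arfima_kernel :: "real \<Rightarrow> real \<Rightarrow> kernel" where
  "arfima_kernel a e s u = ennreal a * acov_kernel e s u"

lemma kmult_arfima_kernel:
  assumes "0 \<le> a" "0 \<le> b" "0 \<le> e" "0 \<le> e'"
  shows "kmult (arfima_kernel a e) (arfima_kernel b e') = arfima_kernel (a * b) (e + e')"
  unfolding arfima_kernel_def[abs_def] kmult_cmult
  using assms by (simp add: kmult_acov_kernel ennreal_mult)

lemma kpow_arfima_kernel:
  assumes "0 \<le> a" "0 \<le> e"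
  shows "kpow (arfima_kernel a e) n = arfima_kernel (a ^ n) (real n * e)"
proof (induction n)
  case 0
  then show ?case by (intro ext) (simp add: arfima_kernel_def acov_kernel_zero)
next
  case (Suc n)
  then show ?case using assms by (simp add: kmult_arfima_kernel algebra_simps)
qed

lemma arfima_kernel_eq:
  "0 \<le> e \<Longrightarrow> e < 1/2 \<Longrightarrow> arfima_kernel a e s u = ennreal a * ennreal (acov e (nat \<bar>s - u\<bar>))"
  by (simp add: arfima_kernel_def acov_kernel_eq)

section \<open>Truncation to a window\<close>

abbreviation window :: "nat \<Rightarrow> int set" where
  "window T \<equiv> {0..<int T}"

definition outside_proj :: "nat \<Rightarrow> kernel" where
  "outside_proj T = kdiag (indicator (- window T))"

definition ktrunc :: "nat \<Rightarrow> kernel \<Rightarrow> kernel \<Rightarrow> kernel" where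
  "ktrunc T K L s u = (\<integral>\<^sup>+t. (if s \<in> window T \<and> t \<in> window T \<and> u \<in> window T then K s t * L t u else 0)
     \<partial>count_space UNIV)"

definition krest :: "nat \<Rightarrow> kernel \<Rightarrow> kernel \<Rightarrow> kernel" where
  "krest T K L s u = (\<integral>\<^sup>+t. (if s \<in> window T \<and> t \<in> window T \<and> u \<in> window T then 0 else K s t * L t u)
     \<partial>count_space UNIV)"

lemma kmult_eq_ktrunc_add_krest: "kmult K L s u = ktrunc T K L s u + krest T K L s u"
  unfolding kmult_def ktrunc_def krest_def by (subst nn_integral_add[symmetric]) (auto intro!: nn_integral_cong)

lemma ktrunc_le_kmult: "ktrunc T K L s u \<le> kmult K L s u"
  using kmult_eq_ktrunc_add_krest[of K L s u T] by simp

text \<open>An entry of the product outside the window is charged to the index that leaves it.\<close>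

lemma krest_le:
  "krest T K L s u \<le> kmult (outside_proj T) (kmult K L) s u + kmult (kmult K (outside_proj T)) L s u
     + kmult (kmult K L) (outside_proj T) s u"
proof -
  let ?out = "indicator (- window T) :: int \<Rightarrow> ennreal"
  have K_out: "kmult K (outside_proj T) = (\<lambda>s t. K s t * ?out t)"
    by (intro ext) (simp add: outside_proj_def kmult_kdiag_right)
  have "krest T K L s u \<le> (\<integral>\<^sup>+t. ?out s * (K s t * L t u) + K s t * ?out t * L t u
      + K s t * L t u * ?out u \<partial>count_space UNIV)"
    unfolding krest_def by (intro nn_integral_mono) (auto simp: ring_distribs split: split_indicator)
  also have "\<dots> = ?out s * kmult K L s u + kmult (\<lambda>s t. K s t * ?out t) L s u + kmult K L s u * ?out u"
    unfolding kmult_def by (simp add: nn_integral_add nn_integral_cmult nn_integral_multc)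
  also have "\<dots> = kmult (outside_proj T) (kmult K L) s u + kmult (kmult K (outside_proj T)) L s u
      + kmult (kmult K L) (outside_proj T) s u"
    unfolding K_out by (simp add: outside_proj_def kmult_kdiag_left kmult_kdiag_right)
  finally show ?thesis .
qed

text \<open>The defect X^n - Y^n for X = Y + Z, stated without subtraction.\<close>

lemma kpow_le_add:
  assumes split: "\<And>s u. X s u = Y s u + Z s u"
  shows "kpow X n s u \<le> kpow Y n s u + (\<Sum>j<n. kmult (kmult (kpow X j) Z) (kpow X (n - Suc j)) s u)"
proof (induction n arbitrary: s u)
  case (Suc n)
  define E where "E s u = (\<Sum>j<n. kmult (kmult (kpow X j) Z) (kpow X (n - Suc j)) s u)" for s u
  have YX: "Y s u \<le> X s u" for s u using split[of s u] by simp
  have "kpow X (Suc n) s u \<le> kmult (\<lambda>s u. kpow Y n s u + E s u) X s u"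
    unfolding kpow.simps using Suc.IH unfolding E_def by (intro kmult_mono) auto
  also have "\<dots> = kmult (kpow Y n) Y s u + kmult (kpow Y n) Z s u + kmult E X s u"
    unfolding kmult_add_left by (subst split[abs_def]) (simp add: kmult_add_right)
  also have "kmult (kpow Y n) Z s u \<le> kmult (kmult (kpow X n) Z) (kpow X (Suc n - Suc n)) s u"
    using YX by (simp add: kmult_mono kpow_mono)
  also have "kmult E X s u = (\<Sum>j<n. kmult (kmult (kpow X j) Z) (kpow X (Suc n - Suc j)) s u)"
    unfolding E_def kmult_sum_left
  proof (intro sum.cong refl)
    fix j assume "j \<in> {..<n}"
    then have "Suc n - Suc j = Suc (n - Suc j)" by simp
    then show "kmult (kmult (kmult (kpow X j) Z) (kpow X (n - Suc j))) X s u
        = kmult (kmult (kpow X j) Z) (kpow X (Suc n - Suc j)) s u"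
      by (simp add: kmult_assoc)
  qed
  finally show ?case by (simp add: add_ac)
qed simp

definition window_kernel :: "nat \<Rightarrow> real mat \<Rightarrow> kernel" where
  "window_kernel T P s u = (if s \<in> window T \<and> u \<in> window T then ennreal (P $$ (nat s, nat u)) else 0)"

lemma nn_integral_window:
  assumes "\<And>t. t \<notin> window T \<Longrightarrow> f t = 0"
  shows "(\<integral>\<^sup>+t. f t \<partial>count_space UNIV) = (\<Sum>t<T. f (int t))"
proof -
  have "window T = int ` {..<T}"
  proof (intro equalityI subsetI)
    fix t assume "t \<in> window T"
    then show "t \<in> int ` {..<T}" by (intro image_eqI[of _ int "nat t"]) auto
  qed auto
  then have "(\<integral>\<^sup>+t. f t \<partial>count_space UNIV) = (\<Sum>t\<in>int ` {..<T}. f t)"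
    using assms by (intro nn_integral_count_space') auto
  also have "\<dots> = (\<Sum>t<T. f (int t))" by (simp add: sum.reindex)
  finally show ?thesis .
qed

definition nonneg_mat :: "real mat \<Rightarrow> bool" where
  "nonneg_mat P \<longleftrightarrow> (\<forall>i < dim_row P. \<forall>j < dim_col P. 0 \<le> P $$ (i, j))"

lemma nonneg_mat_mult:
  assumes "nonneg_mat A" "nonneg_mat B" "dim_col A = dim_row B"
  shows "nonneg_mat (A * B)"
  unfolding nonneg_mat_def
proof (intro allI impI)
  fix i j assume "i < dim_row (A * B)" "j < dim_col (A * B)"
  then show "0 \<le> (A * B) $$ (i, j)"
    using assms unfolding nonneg_mat_def by (auto simp: scalar_prod_def intro!: sum_nonneg)
qed

lemma nonneg_mat_pow:
  assumes "P \<in> carrier_mat T T" "nonneg_mat P"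
  shows "nonneg_mat (P ^\<^sub>m n)"
proof (induction n)
  case 0 then show ?case by (simp add: nonneg_mat_def)
next
  case (Suc n) then show ?case using assms by (simp add: nonneg_mat_mult)
qed

lemma ktrunc_eq_window_kernel:
  assumes "A \<in> carrier_mat T T" "B \<in> carrier_mat T T" "nonneg_mat A" "nonneg_mat B"
    and "\<And>i j. i < T \<Longrightarrow> j < T \<Longrightarrow> K (int i) (int j) = ennreal (A $$ (i, j))"
    and "\<And>i j. i < T \<Longrightarrow> j < T \<Longrightarrow> L (int i) (int j) = ennreal (B $$ (i, j))"
  shows "ktrunc T K L = window_kernel T (A * B)"
proof (intro ext)
  fix s u
  show "ktrunc T K L s u = window_kernel T (A * B) s u"
  proof (cases "s \<in> window T \<and> u \<in> window T")
    case True
    then obtain i j where ij: "s = int i" "u = int j" "i < T" "j < T"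
      by (metis atLeastLessThan_iff nonneg_int_cases of_nat_less_iff)
    have "ktrunc T K L s u = (\<Sum>t<T. K s (int t) * L (int t) u)"
      unfolding ktrunc_def using True by (subst nn_integral_window) auto
    also have "\<dots> = (\<Sum>t<T. ennreal (A $$ (i, t) * B $$ (t, j)))"
      using assms ij unfolding nonneg_mat_def by (intro sum.cong refl) (simp add: ennreal_mult')
    also have "\<dots> = ennreal (\<Sum>t<T. A $$ (i, t) * B $$ (t, j))"
      using assms ij unfolding nonneg_mat_def by (intro sum_ennreal mult_nonneg_nonneg) auto
    also have "\<dots> = window_kernel T (A * B) s u"
      using assms(1,2) ij by (simp add: window_kernel_def scalar_prod_def atLeast0LessThan)
    finally show ?thesis .
  qed (auto simp: ktrunc_def window_kernel_def)
qed

lemma kpow_window_kernel: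
  assumes "P \<in> carrier_mat T T" "nonneg_mat P" "i < T" "j < T"
  shows "kpow (window_kernel T P) n (int i) (int j) = ennreal ((P ^\<^sub>m n) $$ (i, j))"
  using assms(4)
proof (induction n arbitrary: j)
  case 0
  then show ?case using assms by (simp add: kdiag_def)
next
  case (Suc n)
  have "kpow (window_kernel T P) (Suc n) (int i) (int j)
      = (\<Sum>t<T. kpow (window_kernel T P) n (int i) (int t) * window_kernel T P (int t) (int j))"
    unfolding kpow.simps kmult_def by (subst nn_integral_window) (auto simp: window_kernel_def)
  also have "\<dots> = (\<Sum>t<T. ennreal ((P ^\<^sub>m n) $$ (i, t) * P $$ (t, j)))"
  proof (rule sum.cong[OF refl])
    fix t assume "t \<in> {..<T}"
    then have "window_kernel T P (int t) (int j) = ennreal (P $$ (t, j))"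
      using Suc.prems by (simp add: window_kernel_def)
    moreover have "0 \<le> (P ^\<^sub>m n) $$ (i, t)"
      using \<open>t \<in> {..<T}\<close> nonneg_mat_pow[OF assms(1,2), of n] assms unfolding nonneg_mat_def by auto
    ultimately show "kpow (window_kernel T P) n (int i) (int t) * window_kernel T P (int t) (int j)
        = ennreal ((P ^\<^sub>m n) $$ (i, t) * P $$ (t, j))"
      using Suc.IH[of t] \<open>t \<in> {..<T}\<close> by (simp add: ennreal_mult')
  qed
  also have "\<dots> = ennreal (\<Sum>t<T. (P ^\<^sub>m n) $$ (i, t) * P $$ (t, j))"
    using nonneg_mat_pow[OF assms(1,2), of n] assms(1-3) Suc.prems unfolding nonneg_mat_def
    by (intro sum_ennreal mult_nonneg_nonneg) auto
  also have "\<dots> = ennreal ((P ^\<^sub>m Suc n) $$ (i, j))"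
    using assms Suc by (simp add: scalar_prod_def atLeast0LessThan)
  finally show ?case .
qed

section \<open>Boundary estimates\<close>

definition diag_sum_bigo :: "(nat \<Rightarrow> kernel) \<Rightarrow> real \<Rightarrow> bool" where
  "diag_sum_bigo F p \<longleftrightarrow> (\<exists>C\<ge>0. \<forall>T. (\<Sum>s<T. F T (int s) (int s)) \<le> ennreal (C * real T powr p))"

lemma diag_sum_bigo_add:
  assumes "diag_sum_bigo F p" "diag_sum_bigo G p"
  shows "diag_sum_bigo (\<lambda>T s u. F T s u + G T s u) p"
proof -
  obtain C1 where C1: "C1 \<ge> 0" "\<And>T. (\<Sum>s<T. F T (int s) (int s)) \<le> ennreal (C1 * real T powr p)"
    using assms(1) unfolding diag_sum_bigo_def by blast
  obtain C2 where C2: "C2 \<ge> 0" "\<And>T. (\<Sum>s<T. G T (int s) (int s)) \<le> ennreal (C2 * real T powr p)"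
    using assms(2) unfolding diag_sum_bigo_def by blast
  have "(\<Sum>s<T. F T (int s) (int s) + G T (int s) (int s)) \<le> ennreal ((C1 + C2) * real T powr p)" for T
  proof -
    have "(\<Sum>s<T. F T (int s) (int s) + G T (int s) (int s))
        \<le> ennreal (C1 * real T powr p) + ennreal (C2 * real T powr p)"
      unfolding sum.distrib by (intro add_mono C1 C2)
    also have "\<dots> = ennreal ((C1 + C2) * real T powr p)"
      using C1 C2 by (simp add: ennreal_plus[symmetric] distrib_right del: ennreal_plus)
    finally show ?thesis .
  qed
  with C1 C2 show ?thesis unfolding diag_sum_bigo_def by (intro exI[of _ "C1 + C2"]) auto
qed

lemma diag_sum_bigo_sum:
  assumes "finite A" "\<And>j. j \<in> A \<Longrightarrow> diag_sum_bigo (F j) p"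
  shows "diag_sum_bigo (\<lambda>T s u. \<Sum>j\<in>A. F j T s u) p"
  using assms
proof (induction A rule: finite_induct)
  case empty
  show ?case unfolding diag_sum_bigo_def by (intro exI[of _ 0]) simp
next
  case (insert j A)
  then show ?case by (simp add: diag_sum_bigo_add)
qed

lemma diag_sum_bigo_mono:
  assumes "\<And>T s. G T s s \<le> F T s s" "diag_sum_bigo F p"
  shows "diag_sum_bigo G p"
  using assms(2) unfolding diag_sum_bigo_def by (meson assms(1) order_trans sum_mono)

lemma nn_integral_outside_le:
  fixes g :: "int \<Rightarrow> ennreal"
  shows "(\<integral>\<^sup>+u. indicator (- window T) u * g u \<partial>count_space UNIV)
     \<le> (\<integral>\<^sup>+j. g (- 1 - int j) \<partial>count_space UNIV) + (\<integral>\<^sup>+j. g (int T + int j) \<partial>count_space UNIV)"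
proof -
  have "(\<integral>\<^sup>+u. indicator (- window T) u * g u \<partial>count_space UNIV)
      \<le> (\<integral>\<^sup>+u. g u * indicator {..<0} u + g u * indicator {int T..} u \<partial>count_space UNIV)"
    by (intro nn_integral_mono) (auto split: split_indicator)
  also have "\<dots> = (\<integral>\<^sup>+u. g u \<partial>count_space {..<0}) + (\<integral>\<^sup>+u. g u \<partial>count_space {int T..})"
    by (simp add: nn_integral_add nn_integral_count_space_indicator)
  also have "(\<integral>\<^sup>+u. g u \<partial>count_space {..<0}) = (\<integral>\<^sup>+j. g (- 1 - int j) \<partial>count_space UNIV)"
    by (rule nn_integral_bij_count_space[symmetric], rule bij_betwI[where g = "\<lambda>u. nat (- 1 - u)"]) auto
  also have "(\<integral>\<^sup>+u. g u \<partial>count_space {int T..}) = (\<integral>\<^sup>+j. g (int T + int j) \<partial>count_space UNIV)"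
    by (rule nn_integral_bij_count_space[symmetric], rule bij_betwI[where g = "\<lambda>u. nat (u - int T)"]) auto
  finally show ?thesis .
qed

lemma nn_integral_tail_le:
  assumes "1 < b" "\<And>m. 0 \<le> g m" "\<And>m. g m \<le> C * (real m + 1) powr (- b)"
  shows "(\<integral>\<^sup>+j. ennreal (g (j + m + 1)) \<partial>count_space UNIV)
     \<le> ennreal (C * (b / (b - 1)) * (real m + 1) powr (1 - b))"
proof -
  have C: "0 \<le> C" using assms(2,3)[of 0] by simp
  have "g (j + m + 1) \<le> C * (real (j + m) + 1) powr (- b)" for j
  proof -
    have "(real (j + m + 1) + 1) powr (- b) \<le> (real (j + m) + 1) powr (- b)"
      using assms(1) by (intro powr_mono2') simp_all
    from mult_left_mono[OF this C] show ?thesis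
      using assms(3)[of "j + m + 1"] by linarith
  qed
  then have "(\<integral>\<^sup>+j. ennreal (g (j + m + 1)) \<partial>count_space UNIV)
      \<le> (\<integral>\<^sup>+j. ennreal (C * (real (j + m) + 1) powr (- b)) \<partial>count_space UNIV)"
    by (intro nn_integral_mono ennreal_leI)
  also have "\<dots> = ennreal (\<Sum>j. C * (real (j + m) + 1) powr (- b))"
    using C powr_tail_sums_le(1)[OF assms(1)]
    by (simp add: nn_integral_count_space_nat suminf_ennreal2 summable_mult)
  also have "\<dots> \<le> ennreal (C * (b / (b - 1)) * (real m + 1) powr (1 - b))"
  proof (rule ennreal_leI)
    have "(\<Sum>j. C * (real (j + m) + 1) powr (- b)) = C * (\<Sum>j. (real (j + m) + 1) powr (- b))"
      by (rule suminf_mult[OF powr_tail_sums_le(1)[OF assms(1)]])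
    also have "\<dots> \<le> C * (b / (b - 1) * (real m + 1) powr (1 - b))"
      by (rule mult_left_mono[OF powr_tail_sums_le(2)[OF assms(1)] C])
    finally show "(\<Sum>j. C * (real (j + m) + 1) powr (- b)) \<le> C * (b / (b - 1)) * (real m + 1) powr (1 - b)"
      by (simp add: mult_ac)
  qed
  finally show ?thesis .
qed

lemma outside_row_le:
  assumes "1 < b" "\<And>m. 0 \<le> g m" "\<And>m. g m \<le> C * (real m + 1) powr (- b)" "s < T"
  shows "(\<integral>\<^sup>+u. indicator (- window T) u * ennreal (g (nat \<bar>int s - u\<bar>)) \<partial>count_space UNIV)
     \<le> ennreal (C * (b / (b - 1)) * ((real s + 1) powr (1 - b) + (real (T - s - 1) + 1) powr (1 - b)))"
proof -
  have K: "0 \<le> C * (b / (b - 1))" using assms(1) assms(2,3)[of 0] by simp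
  have "nat \<bar>int s - (- 1 - int j)\<bar> = j + s + 1" "nat \<bar>int s - (int T + int j)\<bar> = j + (T - s - 1) + 1" for j
    using assms(4) by arith+
  then have "(\<integral>\<^sup>+u. indicator (- window T) u * ennreal (g (nat \<bar>int s - u\<bar>)) \<partial>count_space UNIV)
      \<le> (\<integral>\<^sup>+j. ennreal (g (j + s + 1)) \<partial>count_space UNIV)
        + (\<integral>\<^sup>+j. ennreal (g (j + (T - s - 1) + 1)) \<partial>count_space UNIV)"
    using nn_integral_outside_le[of T "\<lambda>u. ennreal (g (nat \<bar>int s - u\<bar>))"] by simp
  also have "\<dots> \<le> ennreal (C * (b / (b - 1)) * (real s + 1) powr (1 - b))
      + ennreal (C * (b / (b - 1)) * (real (T - s - 1) + 1) powr (1 - b))"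
    by (intro add_mono nn_integral_tail_le assms)
  also have "\<dots> = ennreal (C * (b / (b - 1)) * ((real s + 1) powr (1 - b) + (real (T - s - 1) + 1) powr (1 - b)))"
    unfolding distrib_left by (rule ennreal_plus[symmetric]; rule mult_nonneg_nonneg[OF K]) simp_all
  finally show ?thesis .
qed

lemma sum_two_sided_powr_le:
  assumes "0 < a" "a \<le> 1"
  shows "(\<Sum>s<T. (real s + 1) powr (a - 1) + (real (T - s - 1) + 1) powr (a - 1)) \<le> 2 * (real T powr a / a)"
proof -
  have "(\<Sum>s<T. (real (T - s - 1) + 1) powr (a - 1)) = (\<Sum>s<T. (\<lambda>i. (real i + 1) powr (a - 1)) (T - Suc s))"
    by simp
  also have "\<dots> = (\<Sum>s<T. (real s + 1) powr (a - 1))"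
    by (rule sum.nat_diff_reindex)
  finally have "(\<Sum>s<T. (real s + 1) powr (a - 1) + (real (T - s - 1) + 1) powr (a - 1))
      = 2 * (\<Sum>s<T. (real s + 1) powr (a - 1))"
    by (simp add: sum.distrib)
  also have "\<dots> \<le> 2 * (real T powr a / a)"
    using sum_powr_le[OF assms, of T] by simp
  finally show ?thesis .
qed

text \<open>Summing the decaying correlations over pairs (s, u) with s inside and u outside the
  window: each row contributes O(s^(1-b) + (T - s)^(1-b)), in total O(T^(2-b)).\<close>

lemma outside_rows_sum_le:
  assumes "1 < b" "b < 2" "\<And>m. 0 \<le> g m" "\<And>m. g m \<le> C * (real m + 1) powr (- b)"
  shows "(\<Sum>s<T. \<integral>\<^sup>+u. indicator (- window T) u * ennreal (g (nat \<bar>int s - u\<bar>)) \<partial>count_space UNIV)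
     \<le> ennreal (2 * C * (b / (b - 1)) / (2 - b) * real T powr (2 - b))"
proof -
  define K where "K = C * (b / (b - 1))"
  have K: "0 \<le> K" using assms(1) assms(3,4)[of 0] by (simp add: K_def)
  have "(\<Sum>s<T. \<integral>\<^sup>+u. indicator (- window T) u * ennreal (g (nat \<bar>int s - u\<bar>)) \<partial>count_space UNIV)
      \<le> (\<Sum>s<T. ennreal (K * ((real s + 1) powr (1 - b) + (real (T - s - 1) + 1) powr (1 - b))))"
    unfolding K_def by (intro sum_mono outside_row_le assms) simp
  also have "\<dots> = ennreal (K * (\<Sum>s<T. (real s + 1) powr ((2 - b) - 1) + (real (T - s - 1) + 1) powr ((2 - b) - 1)))"
    using K by (simp add: sum_ennreal sum_distrib_left)
  also have "\<dots> \<le> ennreal (K * (2 * (real T powr (2 - b) / (2 - b))))"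
    using sum_two_sided_powr_le[of "2 - b" T] assms(1,2) K by (intro ennreal_leI mult_left_mono) simp_all
  finally show ?thesis by (simp add: K_def mult_ac)
qed

lemma kmult_outside_proj_diag:
  "kmult (kmult K (outside_proj T)) L s s = (\<integral>\<^sup>+u. indicator (- window T) u * (K s u * L u s) \<partial>count_space UNIV)"
  unfolding kmult_def[of "kmult K (outside_proj T)" L] by (simp add: outside_proj_def kmult_kdiag_right mult_ac)

lemma acov_mult_bound:
  assumes "0 \<le> e" "e < 1/2" "0 \<le> e'" "e' < 1/2"
  obtains C where "0 \<le> C" "\<And>m. acov e m * acov e' m \<le> C * (real m + 1) powr (- (2 - 2 * (e + e')))"
proof -
  obtain C1 where C1: "0 \<le> C1" "\<And>m. acov e m \<le> C1 * (real m + 1) powr (2 * e - 1)"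
    using acov_bound[OF assms(1,2)] by auto
  obtain C2 where C2: "0 \<le> C2" "\<And>m. acov e' m \<le> C2 * (real m + 1) powr (2 * e' - 1)"
    using acov_bound[OF assms(3,4)] by auto
  have "acov e m * acov e' m \<le> C1 * C2 * (real m + 1) powr (- (2 - 2 * (e + e')))" for m
  proof -
    have "acov e m * acov e' m \<le> (C1 * (real m + 1) powr (2 * e - 1)) * (C2 * (real m + 1) powr (2 * e' - 1))"
      using C1 C2 acov_nonneg[of e m] acov_nonneg[of e' m] assms by (intro mult_mono) simp_all
    also have "\<dots> = C1 * C2 * (real m + 1) powr (- (2 - 2 * (e + e')))"
      by (simp add: powr_add[symmetric] algebra_simps)
    finally show ?thesis .
  qed
  with C1 C2 show ?thesis by (intro that[of "C1 * C2"]) simp_all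
qed

lemma diag_sum_bigo_outside:
  assumes "0 \<le> a" "0 \<le> a'" "0 \<le> e" "0 \<le> e'" "0 < e + e'" "e + e' < 1/2"
  shows "diag_sum_bigo (\<lambda>T. kmult (kmult (arfima_kernel a e) (outside_proj T)) (arfima_kernel a' e'))
           (2 * (e + e'))"
proof -
  define g where "g m = acov e m * acov e' m" for m
  define b where "b = 2 - 2 * (e + e')"
  obtain C0 where C0: "0 \<le> C0" "\<And>m. g m \<le> C0 * (real m + 1) powr (- b)"
    using acov_mult_bound[of e e'] assms unfolding g_def b_def by auto
  have g: "0 \<le> g m" for m using assms by (simp add: g_def acov_nonneg)
  have diag: "kmult (kmult (arfima_kernel a e) (outside_proj T)) (arfima_kernel a' e') s s
      = ennreal (a * a') * (\<integral>\<^sup>+u. indicator (- window T) u * ennreal (g (nat \<bar>s - u\<bar>)) \<partial>count_space UNIV)"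
    for T s
    unfolding kmult_outside_proj_diag using assms
    by (subst nn_integral_cmult[symmetric])
      (auto intro!: nn_integral_cong simp: arfima_kernel_eq g_def abs_minus_commute
        ennreal_mult acov_nonneg mult_ac)
  define C where "C = a * a' * (2 * C0 * (b / (b - 1)) / (2 - b))"
  have "(\<Sum>s<T. kmult (kmult (arfima_kernel a e) (outside_proj T)) (arfima_kernel a' e') (int s) (int s))
      \<le> ennreal (C * real T powr (2 * (e + e')))" for T
  proof -
    have "(\<Sum>s<T. kmult (kmult (arfima_kernel a e) (outside_proj T)) (arfima_kernel a' e') (int s) (int s))
        = ennreal (a * a') * (\<Sum>s<T. \<integral>\<^sup>+u. indicator (- window T) u * ennreal (g (nat \<bar>int s - u\<bar>))
            \<partial>count_space UNIV)"
      by (simp add: diag sum_distrib_left)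
    also have "\<dots> \<le> ennreal (a * a') * ennreal (2 * C0 * (b / (b - 1)) / (2 - b) * real T powr (2 - b))"
      using assms by (intro mult_left_mono outside_rows_sum_le g C0) (auto simp: b_def)
    also have "\<dots> = ennreal (C * real T powr (2 * (e + e')))"
      using assms C0 by (simp add: C_def b_def ennreal_mult[symmetric] mult_ac)
    finally show ?thesis .
  qed
  moreover have "0 \<le> C"
    using assms C0 by (simp add: C_def b_def)
  ultimately show ?thesis unfolding diag_sum_bigo_def by blast
qed

lemma kmult_krest_le:
  "kmult (kmult A (krest T R1 R2)) B s u
     \<le> kmult (kmult A (outside_proj T)) (kmult (kmult R1 R2) B) s u
       + kmult (kmult (kmult A R1) (outside_proj T)) (kmult R2 B) s u
       + kmult (kmult (kmult A (kmult R1 R2)) (outside_proj T)) B s u"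
proof -
  let ?D = "outside_proj T" and ?X = "kmult R1 R2"
  have "kmult (kmult A (krest T R1 R2)) B s u
      \<le> kmult (kmult A (\<lambda>s u. kmult ?D ?X s u + kmult (kmult R1 ?D) R2 s u + kmult ?X ?D s u)) B s u"
    by (intro kmult_mono order_refl krest_le)
  also have "\<dots> = kmult (kmult A (kmult ?D ?X)) B s u + kmult (kmult A (kmult (kmult R1 ?D) R2)) B s u
      + kmult (kmult A (kmult ?X ?D)) B s u"
    by (simp add: kmult_add_left kmult_add_right)
  also have "\<dots> = kmult (kmult A ?D) (kmult ?X B) s u + kmult (kmult (kmult A R1) ?D) (kmult R2 B) s u
      + kmult (kmult (kmult A ?X) ?D) B s u"
    by (simp add: kmult_assoc)
  finally show ?thesis .
qed

text \<open>Each of the \<nu> terms of the defect X^\<nu> - Y^\<nu> passes once through the complement of the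
  window, between two ARFIMA kernels whose memory parameters add up to \<nu> (d1 + d2).\<close>

lemma diag_sum_bigo_defect_term:
  assumes "0 \<le> s1" "0 \<le> s2" "0 \<le> d1" "0 \<le> d2" "Suc (j + m) = \<nu>"
    and "0 < real \<nu> * (d1 + d2)" "real \<nu> * (d1 + d2) < 1/2"
  defines "X \<equiv> kmult (arfima_kernel s1 d1) (arfima_kernel s2 d2)"
  shows "diag_sum_bigo (\<lambda>T. kmult (kmult (kpow X j) (krest T (arfima_kernel s1 d1) (arfima_kernel s2 d2)))
           (kpow X m)) (2 * (real \<nu> * (d1 + d2)))"
proof -
  define c d where "c = s1 * s2" and "d = d1 + d2"
  have c: "0 \<le> c" and d: "0 \<le> d" and \<delta>: "0 < real \<nu> * d" "real \<nu> * d < 1/2"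
    using assms by (simp_all add: c_def d_def)
  have X: "X = arfima_kernel c d" unfolding X_def c_def d_def using assms by (simp add: kmult_arfima_kernel)
  have pow: "kpow X n = arfima_kernel (c ^ n) (real n * d)" for n
    unfolding X using c d by (rule kpow_arfima_kernel)
  have e1: "real j * d + real (Suc m) * d = real \<nu> * d"
    and e2: "(real j * d + d1) + (d2 + real m * d) = real \<nu> * d"
    and e3: "real (Suc j) * d + real m * d = real \<nu> * d"
    using assms(5) by (simp_all add: d_def flip: assms(5)) (simp_all add: algebra_simps)
  have "diag_sum_bigo (\<lambda>T. kmult (kmult (kpow X j) (outside_proj T)) (kmult X (kpow X m))) (2 * (real \<nu> * d))"
    unfolding kmult_kpow unfolding pow e1[symmetric] using c d \<delta> e1
    by (intro diag_sum_bigo_outside) simp_all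
  moreover have "diag_sum_bigo (\<lambda>T. kmult (kmult (kmult (kpow X j) (arfima_kernel s1 d1)) (outside_proj T))
      (kmult (arfima_kernel s2 d2) (kpow X m))) (2 * (real \<nu> * d))"
  proof -
    have "kmult (kpow X j) (arfima_kernel s1 d1) = arfima_kernel (c ^ j * s1) (real j * d + d1)"
      "kmult (arfima_kernel s2 d2) (kpow X m) = arfima_kernel (s2 * c ^ m) (d2 + real m * d)"
      unfolding pow using c d assms(1-4) by (simp_all add: kmult_arfima_kernel)
    moreover have "diag_sum_bigo (\<lambda>T. kmult (kmult (arfima_kernel (c ^ j * s1) (real j * d + d1)) (outside_proj T))
        (arfima_kernel (s2 * c ^ m) (d2 + real m * d))) (2 * ((real j * d + d1) + (d2 + real m * d)))"
      using c d \<delta> e2 assms(1-4) by (intro diag_sum_bigo_outside) simp_all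
    ultimately show ?thesis unfolding e2 by simp
  qed
  moreover have "diag_sum_bigo (\<lambda>T. kmult (kmult (kmult (kpow X j) X) (outside_proj T)) (kpow X m))
      (2 * (real \<nu> * d))"
    unfolding kpow.simps(2)[symmetric] unfolding pow e3[symmetric] using c d \<delta> e3
    by (intro diag_sum_bigo_outside) simp_all
  ultimately have "diag_sum_bigo (\<lambda>T s u. kmult (kmult (kpow X j) (outside_proj T)) (kmult X (kpow X m)) s u
        + kmult (kmult (kmult (kpow X j) (arfima_kernel s1 d1)) (outside_proj T)) (kmult (arfima_kernel s2 d2) (kpow X m)) s u
        + kmult (kmult (kmult (kpow X j) X) (outside_proj T)) (kpow X m) s u) (2 * (real \<nu> * d))"
    by (intro diag_sum_bigo_add)
  then show ?thesis
    unfolding d_def X_def by (rule diag_sum_bigo_mono[OF kmult_krest_le])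
qed

section \<open>The trace asymptotics\<close>

definition toeplitz_acov :: "nat \<Rightarrow> real \<Rightarrow> real \<Rightarrow> real mat" where
  "toeplitz_acov T s d = mat T T (\<lambda>(i, j). s * acov d (nat \<bar>int i - int j\<bar>))"

lemma toeplitz_acov_carrier [simp]: "toeplitz_acov T s d \<in> carrier_mat T T"
  and dim_toeplitz_acov [simp]: "dim_row (toeplitz_acov T s d) = T" "dim_col (toeplitz_acov T s d) = T"
  by (simp_all add: toeplitz_acov_def)

lemma toeplitz_arfima_sd:
  assumes "0 < d" "d < 1/2"
  shows "toeplitz T (arfima_sd s d) = map_mat complex_of_real (toeplitz_acov T s d)"
  by (rule eq_matI) (simp_all add: toeplitz_def toeplitz_acov_def fcoeff_arfima_sd[OF assms])

lemma nonneg_mat_toeplitz_acov: "0 \<le> s \<Longrightarrow> 0 \<le> d \<Longrightarrow> d < 1/2 \<Longrightarrow> nonneg_mat (toeplitz_acov T s d)"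
  by (simp add: nonneg_mat_def toeplitz_acov_def acov_nonneg)

lemma arfima_kernel_eq_toeplitz_acov:
  assumes "0 \<le> s" "0 \<le> d" "d < 1/2" "i < T" "j < T"
  shows "arfima_kernel s d (int i) (int j) = ennreal (toeplitz_acov T s d $$ (i, j))"
  using assms by (simp add: arfima_kernel_eq toeplitz_acov_def ennreal_mult acov_nonneg)

lemma mat_trace_map_of_real:
  assumes "A \<in> carrier_mat n n"
  shows "mat_trace (map_mat complex_of_real A) = complex_of_real (\<Sum>i<n. A $$ (i, i))"
  using assms by (simp add: mat_trace_def of_real_sum)

lemma kpow_arfima_product_diag:
  assumes "0 \<le> s1" "0 \<le> s2" "0 \<le> d1" "0 \<le> d2" "real \<nu> * (d1 + d2) < 1/2"
  shows "kpow (kmult (arfima_kernel s1 d1) (arfima_kernel s2 d2)) \<nu> s s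
       = ennreal ((s1 * s2) ^ \<nu> * acov (real \<nu> * (d1 + d2)) 0)"
proof -
  have "kmult (arfima_kernel s1 d1) (arfima_kernel s2 d2) = arfima_kernel (s1 * s2) (d1 + d2)"
    using assms by (simp add: kmult_arfima_kernel)
  then have "kpow (kmult (arfima_kernel s1 d1) (arfima_kernel s2 d2)) \<nu>
      = arfima_kernel ((s1 * s2) ^ \<nu>) (real \<nu> * (d1 + d2))"
    using assms by (simp add: kpow_arfima_kernel)
  then show ?thesis
    using assms by (simp add: arfima_kernel_eq ennreal_mult acov_nonneg)
qed

lemma toeplitz_acov_mult_carrier: "toeplitz_acov T s1 d1 * toeplitz_acov T s2 d2 \<in> carrier_mat T T"
  by (rule mult_carrier_mat[OF toeplitz_acov_carrier toeplitz_acov_carrier])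

lemma nonneg_mat_toeplitz_acov_mult:
  assumes "0 \<le> s1" "0 \<le> s2" "0 \<le> d1" "d1 < 1/2" "0 \<le> d2" "d2 < 1/2"
  shows "nonneg_mat (toeplitz_acov T s1 d1 * toeplitz_acov T s2 d2)"
  by (rule nonneg_mat_mult[OF nonneg_mat_toeplitz_acov[OF assms(1,3,4)] nonneg_mat_toeplitz_acov[OF assms(2,5,6)]])
     simp

lemma ktrunc_arfima_eq_window_kernel:
  assumes "0 \<le> s1" "0 \<le> s2" "0 \<le> d1" "d1 < 1/2" "0 \<le> d2" "d2 < 1/2"
  shows "ktrunc T (arfima_kernel s1 d1) (arfima_kernel s2 d2)
       = window_kernel T (toeplitz_acov T s1 d1 * toeplitz_acov T s2 d2)"
  by (rule ktrunc_eq_window_kernel[OF toeplitz_acov_carrier toeplitz_acov_carrier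
        nonneg_mat_toeplitz_acov[OF assms(1,3,4)] nonneg_mat_toeplitz_acov[OF assms(2,5,6)]])
     (use assms in \<open>simp_all add: arfima_kernel_eq_toeplitz_acov\<close>)

lemma diag_sum_bigo_pow_defect:
  assumes "0 \<le> s1" "0 \<le> s2" "0 \<le> d1" "0 \<le> d2"
    and "0 < real \<nu> * (d1 + d2)" "real \<nu> * (d1 + d2) < 1/2"
  defines "X \<equiv> kmult (arfima_kernel s1 d1) (arfima_kernel s2 d2)"
  shows "diag_sum_bigo (\<lambda>T s u. \<Sum>j<\<nu>. kmult (kmult (kpow X j)
           (krest T (arfima_kernel s1 d1) (arfima_kernel s2 d2))) (kpow X (\<nu> - Suc j)) s u)
           (2 * (real \<nu> * (d1 + d2)))"
proof (rule diag_sum_bigo_sum[where F = "\<lambda>j T. kmult (kmult (kpow X j)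
    (krest T (arfima_kernel s1 d1) (arfima_kernel s2 d2))) (kpow X (\<nu> - Suc j))"])
  fix j assume "j \<in> {..<\<nu>}"
  then have "Suc (j + (\<nu> - Suc j)) = \<nu>" by simp
  with assms show "diag_sum_bigo (\<lambda>T. kmult (kmult (kpow X j)
      (krest T (arfima_kernel s1 d1) (arfima_kernel s2 d2))) (kpow X (\<nu> - Suc j))) (2 * (real \<nu> * (d1 + d2)))"
    unfolding X_def by (intro diag_sum_bigo_defect_term) simp_all
qed simp

lemma sum_deficit_le:
  fixes c B :: real and y :: "nat \<Rightarrow> real" and E :: "nat \<Rightarrow> ennreal"
  assumes "\<And>i. i < T \<Longrightarrow> ennreal c \<le> ennreal (y i) + E i" "\<And>i. i < T \<Longrightarrow> 0 \<le> y i"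
    and "0 \<le> c" "0 \<le> B" "(\<Sum>i<T. E i) \<le> ennreal B"
  shows "(\<Sum>i<T. c - y i) \<le> B"
proof -
  have y_sum: "0 \<le> (\<Sum>i<T. y i)" using assms(2) by (intro sum_nonneg) simp
  have "ennreal (\<Sum>i<T. c) = (\<Sum>i<T. ennreal c)"
    by (rule sum_ennreal[symmetric]) (rule assms(3))
  also have "\<dots> \<le> (\<Sum>i<T. ennreal (y i) + E i)"
    by (rule sum_mono) (simp add: assms(1))
  also have "\<dots> = ennreal (\<Sum>i<T. y i) + (\<Sum>i<T. E i)"
    unfolding sum.distrib using assms(2) by (subst sum_ennreal) auto
  also have "\<dots> \<le> ennreal (\<Sum>i<T. y i) + ennreal B"
    by (rule add_left_mono[OF assms(5)])
  also have "\<dots> = ennreal ((\<Sum>i<T. y i) + B)"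
    using y_sum assms(4) by (intro ennreal_plus[symmetric]) simp_all
  finally have "(\<Sum>i<T. c) \<le> (\<Sum>i<T. y i) + B"
    using y_sum assms(4) by (subst (asm) ennreal_le_iff) simp_all
  then show ?thesis by (simp add: sum_subtractf)
qed

text \<open>X = R1 R2 is the product of the infinite Toeplitz kernels; X^\<nu> has constant diagonal c,
  the truncated product Y has the entries of the finite Toeplitz product, and the defect
  X^\<nu> - Y^\<nu> has diagonal sum O(T^(2\<nu>(d1 + d2))).\<close>

lemma toeplitz_pow_diag_deficit:
  assumes "0 \<le> s1" "0 \<le> s2" "0 \<le> d1" "d1 < 1/2" "0 \<le> d2" "d2 < 1/2"
    and "0 < real \<nu> * (d1 + d2)" "real \<nu> * (d1 + d2) < 1/2"
  defines "P T \<equiv> toeplitz_acov T s1 d1 * toeplitz_acov T s2 d2"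
    and "c \<equiv> (s1 * s2) ^ \<nu> * acov (real \<nu> * (d1 + d2)) 0"
  obtains C where "\<And>T i. i < T \<Longrightarrow> (P T ^\<^sub>m \<nu>) $$ (i, i) \<le> c"
    "\<And>T. (\<Sum>i<T. c - (P T ^\<^sub>m \<nu>) $$ (i, i)) \<le> C * real T powr (2 * (real \<nu> * (d1 + d2)))"
proof -
  define R1 R2 where "R1 = arfima_kernel s1 d1" and "R2 = arfima_kernel s2 d2"
  define X where "X = kmult R1 R2"
  define E where "E T s u = (\<Sum>j<\<nu>. kmult (kmult (kpow X j) (krest T R1 R2)) (kpow X (\<nu> - Suc j)) s u)"
    for T s u
  have c: "0 \<le> c"
    unfolding c_def using assms acov_nonneg[of "real \<nu> * (d1 + d2)" 0] by simp
  have X_pow: "kpow X \<nu> s s = ennreal c" for s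
    unfolding X_def R1_def R2_def c_def using assms(1-3,5,8) by (rule kpow_arfima_product_diag)
  have Y_pow: "kpow (ktrunc T R1 R2) \<nu> (int i) (int i) = ennreal ((P T ^\<^sub>m \<nu>) $$ (i, i))"
    if "i < T" for T i
    unfolding R1_def R2_def ktrunc_arfima_eq_window_kernel[OF assms(1-6)] P_def
    by (rule kpow_window_kernel[OF toeplitz_acov_mult_carrier
          nonneg_mat_toeplitz_acov_mult[OF assms(1-6)] that that])
  obtain C where C: "0 \<le> C"
    "\<And>T. (\<Sum>i<T. E T (int i) (int i)) \<le> ennreal (C * real T powr (2 * (real \<nu> * (d1 + d2))))"
    using diag_sum_bigo_pow_defect[OF assms(1-3,5,7,8)]
    unfolding diag_sum_bigo_def E_def X_def R1_def R2_def by blast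
  have le_c: "(P T ^\<^sub>m \<nu>) $$ (i, i) \<le> c" if "i < T" for T i
  proof -
    have "kpow (ktrunc T R1 R2) \<nu> (int i) (int i) \<le> kpow X \<nu> (int i) (int i)"
      unfolding X_def by (intro kpow_mono ktrunc_le_kmult)
    then show ?thesis
      unfolding Y_pow[OF that] X_pow using c by simp
  qed
  have defect: "ennreal c \<le> ennreal ((P T ^\<^sub>m \<nu>) $$ (i, i)) + E T (int i) (int i)" if "i < T" for T i
  proof -
    have split: "\<And>s u. X s u = ktrunc T R1 R2 s u + krest T R1 R2 s u"
      unfolding X_def by (rule kmult_eq_ktrunc_add_krest)
    from kpow_le_add[of X "ktrunc T R1 R2" "krest T R1 R2", OF split, of \<nu> "int i" "int i"] show ?thesis
      unfolding E_def Y_pow[OF that] X_pow .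
  qed
  have nonneg: "0 \<le> (P T ^\<^sub>m \<nu>) $$ (i, i)" if "i < T" for T i
    using nonneg_mat_pow[OF toeplitz_acov_mult_carrier nonneg_mat_toeplitz_acov_mult[OF assms(1-6)], of T \<nu>]
      that unfolding nonneg_mat_def P_def by simp
  show ?thesis
  proof (rule that[of C, OF le_c])
    show "(\<Sum>i<T. c - (P T ^\<^sub>m \<nu>) $$ (i, i)) \<le> C * real T powr (2 * (real \<nu> * (d1 + d2)))" for T
      using defect nonneg c C by (intro sum_deficit_le mult_nonneg_nonneg) simp_all
  qed
qed

lemma mat_trace_toeplitz_arfima_pow:
  assumes "0 < d1" "d1 < 1/2" "0 < d2" "d2 < 1/2"
  shows "mat_trace ((toeplitz T (arfima_sd s1 d1) * toeplitz T (arfima_sd s2 d2)) ^\<^sub>m \<nu>)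
       = complex_of_real (\<Sum>i<T. ((toeplitz_acov T s1 d1 * toeplitz_acov T s2 d2) ^\<^sub>m \<nu>) $$ (i, i))"
proof -
  have "toeplitz T (arfima_sd s1 d1) * toeplitz T (arfima_sd s2 d2)
      = map_mat complex_of_real (toeplitz_acov T s1 d1 * toeplitz_acov T s2 d2)"
    unfolding toeplitz_arfima_sd[OF assms(1,2)] toeplitz_arfima_sd[OF assms(3,4)]
    by (rule of_real_hom.mat_hom_mult[OF toeplitz_acov_carrier toeplitz_acov_carrier, symmetric])
  moreover have "toeplitz_acov T s1 d1 * toeplitz_acov T s2 d2 \<in> carrier_mat T T"
    by (rule mult_carrier_mat[OF toeplitz_acov_carrier toeplitz_acov_carrier])
  ultimately show ?thesis
    using mat_trace_map_of_real[OF pow_carrier_mat] by (simp add: of_real_hom.mat_hom_pow[symmetric])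
qed

lemma Delta_arfima_le_powr:
  assumes "1 \<le> \<nu>" "0 < s1" "0 < s2" "0 < d1" "d1 < 1/2" "0 < d2" "d2 < 1/2"
    and "real \<nu> * (d1 + d2) < 1/2"
  obtains C where "\<And>T. 1 \<le> T \<Longrightarrow>
    Delta \<nu> (arfima_sd s1 d1) (arfima_sd s2 d2) T \<le> C * real T powr (2 * (real \<nu> * (d1 + d2)) - 1)"
proof -
  let ?c = "(s1 * s2) ^ \<nu> * acov (real \<nu> * (d1 + d2)) 0"
  let ?y = "\<lambda>T i. ((toeplitz_acov T s1 d1 * toeplitz_acov T s2 d2) ^\<^sub>m \<nu>) $$ (i, i)"
  have pos: "0 < real \<nu> * (d1 + d2)" using assms by simp
  obtain C where y_le: "\<And>T i. i < T \<Longrightarrow> ?y T i \<le> ?c"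
    and deficit: "\<And>T. (\<Sum>i<T. ?c - ?y T i) \<le> C * real T powr (2 * (real \<nu> * (d1 + d2)))"
    by (rule toeplitz_pow_diag_deficit[of s1 s2 d1 d2 \<nu>]) (use assms pos in \<open>simp_all, blast\<close>)
  have "Delta \<nu> (arfima_sd s1 d1) (arfima_sd s2 d2) T \<le> C * real T powr (2 * (real \<nu> * (d1 + d2)) - 1)"
    if "1 \<le> T" for T
  proof -
    have "Delta \<nu> (arfima_sd s1 d1) (arfima_sd s2 d2) T = \<bar>(\<Sum>i<T. ?y T i) / real T - ?c\<bar>"
    proof -
      have "complex_of_real (\<Sum>i<T. ?y T i) / of_nat T - complex_of_real ?c
          = complex_of_real ((\<Sum>i<T. ?y T i) / real T - ?c)"
        by (simp only: of_real_diff of_real_divide of_real_of_nat_eq)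
      then show ?thesis
        unfolding Delta_def mat_trace_toeplitz_arfima_pow[OF assms(4-7)] integral_arfima_product_power[OF assms(1,4,6,8)]
        by (simp only: norm_of_real)
    qed
    also have "\<dots> = (\<Sum>i<T. ?c - ?y T i) / real T"
    proof -
      have "(\<Sum>i<T. ?y T i) \<le> (\<Sum>i<T. ?c)" by (intro sum_mono y_le) simp
      moreover have "(\<Sum>i<T. ?y T i) / real T - ?c = - ((\<Sum>i<T. ?c - ?y T i) / real T)"
        using that by (simp add: sum_subtractf field_simps)
      ultimately show ?thesis by (simp add: sum_subtractf)
    qed
    also have "\<dots> \<le> C * real T powr (2 * (real \<nu> * (d1 + d2))) / real T"
      using deficit that by (simp add: divide_right_mono)
    also have "\<dots> = C * real T powr (2 * (real \<nu> * (d1 + d2)) - 1)"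
      using that by (simp add: powr_diff)
    finally show ?thesis .
  qed
  then show ?thesis by (rule that)
qed

lemma bigo_powr_of_le:
  fixes f :: "nat \<Rightarrow> real"
  assumes "\<And>T. 1 \<le> T \<Longrightarrow> f T \<le> C * real T powr a" "a \<le> b" "\<And>T. 0 \<le> f T"
  shows "f \<in> O(\<lambda>T. real T powr b)"
proof (rule bigoI[where c = "max C 0"])
  show "\<forall>\<^sub>F T in at_top. norm (f T) \<le> max C 0 * norm (real T powr b)"
    using eventually_ge_at_top[of "1::nat"]
  proof eventually_elim
    case (elim T)
    have "f T \<le> max C 0 * real T powr a"
      using assms(1)[OF elim] by (rule order_trans) (simp add: mult_right_mono)
    also have "\<dots> \<le> max C 0 * real T powr b"
      using elim assms(2) by (intro mult_left_mono powr_mono) simp_all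
    finally show ?case using assms(3)[of T] by simp
  qed
qed

theorem theorem4p1:
  fixes \<nu> :: nat and s1 s2 d1 d2 :: real
  assumes "\<nu> \<ge> 1"
    and "0 < s1" and "0 < s2"
    and "0 < d1" and "d1 < 1/2" and "0 < d2" and "d2 < 1/2"
    and "d1 + d2 < 1 / (2 * real \<nu>)"
  shows "\<forall>\<epsilon>>0. (\<lambda>T. Delta \<nu> (arfima_sd s1 d1) (arfima_sd s2 d2) T)
           \<in> O[at_top](\<lambda>T. real T powr (- (1 / (2 * real \<nu>) - (d1 + d2)) + \<epsilon>))"
proof (intro allI impI)
  fix \<epsilon> :: real assume "\<epsilon> > 0"
  have \<nu>: "real \<nu> \<ge> 1" using assms(1) by simp
  then have "real \<nu> * (d1 + d2) < 1/2"
    using assms(8) by (simp add: field_simps)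
  then obtain C where C: "\<And>T. 1 \<le> T \<Longrightarrow>
      Delta \<nu> (arfima_sd s1 d1) (arfima_sd s2 d2) T \<le> C * real T powr (2 * (real \<nu> * (d1 + d2)) - 1)"
    using Delta_arfima_le_powr assms by blast
  have rate: "2 * (real \<nu> * (d1 + d2)) - 1 \<le> - (1 / (2 * real \<nu>) - (d1 + d2)) + \<epsilon>"
  proof -
    have "(2 * real \<nu> - 1) * (d1 + d2) \<le> (2 * real \<nu> - 1) * (1 / (2 * real \<nu>))"
      using assms(8) \<nu> by (intro mult_left_mono) auto
    also have "\<dots> = 1 - 1 / (2 * real \<nu>)"
      using \<nu> by (simp add: field_simps)
    finally show ?thesis using \<open>\<epsilon> > 0\<close> by (simp add: algebra_simps)
  qed
  have "0 \<le> Delta \<nu> (arfima_sd s1 d1) (arfima_sd s2 d2) T" for T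
    unfolding Delta_def by (rule norm_ge_zero)
  from bigo_powr_of_le[OF C rate this]
  show "(\<lambda>T. Delta \<nu> (arfima_sd s1 d1) (arfima_sd s2 d2) T)
      \<in> O[at_top](\<lambda>T. real T powr (- (1 / (2 * real \<nu>) - (d1 + d2)) + \<epsilon>))" .
qed

end
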